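(* Let $n\ge0$ be an integer, $a,c\in\mathbb C$, and let $f\in W_c^n$. Then (for parameter values at which all denominators are nonzero) \begin{gather*} \frac{\big(a^2 q, q, cz, c/z;q,p\big)_n}{(ac, c/a, aqz, aq/z;q,p)_n}f(z) = \sum_{k=0}^n q^k \frac{\theta\big(a^2 q^{2k};p\big)}{\theta(a^2 ;p)}\frac{\big( q^{-n}, a^2 ,aq/c,ac q^n, az, a/z;q,p\big)_k}{\big(q, a^2 q^{n+1},ac, aq^{1-n}/c, aqz, aq/z;q,p\big)_k}f\big(a q^k\big). \end{gather*}
   Context: Fix complex numbers $q,p$ with $0<|q|<1$, $|p|<1$. The modified Jacobi theta function is $\theta(x;p)=\prod_{j\ge0}(1-p^jx)(1-p^{j+1}/x)$ for $x\neq0$, and $\theta(x_1,\dots,x_r;p)=\prod_i\theta(x_i;p)$. The theta shifted factorial is $(a;q,p)_n=\prod_{k=0}^{n-1}\theta(aq^k;p)$ for $n\ge1$, $(a;q,p)_0=1$, and $(a_1,\dots,a_r;q,p)_n=\prod_i(a_i;q,p)_n$. The space $W_c^n$ is the complex span of all functions $g_k(z)/(cz,c/z;q,p)_k$, $0\le k\le n$, where $g_k$ ranges over functions holomorphic on $\mathbb C\setminus\{0\}$ with $g_k(z)=g_k(1/z)$ and $g_k(pz)=p^{-k}z^{-2k}g_k(z)$. *)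

theory Defs
  imports "HOL-Analysis.Analysis" "HOL-Library.Function_Algebras"
begin

definition mtheta :: "complex \<Rightarrow> complex \<Rightarrow> complex" where
  "mtheta x p = (\<Prod>j. (1 - p ^ j * x) * (1 - p ^ Suc j / x))"

definition tpoch :: "complex \<Rightarrow> complex \<Rightarrow> complex \<Rightarrow> nat \<Rightarrow> complex" where
  "tpoch a q p n = (\<Prod>k<n. mtheta (a * q ^ k) p)"

definition fscale :: "complex \<Rightarrow> (complex \<Rightarrow> complex) \<Rightarrow> (complex \<Rightarrow> complex)" where
  "fscale s f = (\<lambda>z. s * f z)"

definition Wgen :: "complex \<Rightarrow> complex \<Rightarrow> complex \<Rightarrow> nat \<Rightarrow> (complex \<Rightarrow> complex) set" where
  "Wgen q p c n = {(\<lambda>z. g z / (tpoch (c * z) q p k * tpoch (c / z) q p k)) | g k.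
      k \<le> n \<and> g holomorphic_on (- {0}) \<and>
      (\<forall>z. z \<noteq> 0 \<longrightarrow> g z = g (1 / z)) \<and>
      (\<forall>z. z \<noteq> 0 \<longrightarrow> g (p * z) = inverse (p ^ k) * inverse (z ^ (2 * k)) * g z)}"

definition W :: "complex \<Rightarrow> complex \<Rightarrow> complex \<Rightarrow> nat \<Rightarrow> (complex \<Rightarrow> complex) set" where
  "W q p c n = module.span fscale (Wgen q p c n)"

end

theory Submission
  imports Defs "HOL-Complex_Analysis.Complex_Analysis"
begin

text \<open>Multiplying \<open>f = g\<^sub>k / (cz, c/z;q,p)\<^sub>k\<close> by \<open>(cz, c/z;q,p)\<^sub>n\<close> gives an even theta
  function \<open>F\<close> of degree \<open>n\<close>: holomorphic on \<open>\<complex> - {0}\<close>, invariant under \<open>z \<mapsto> 1/z\<close> and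
  quasi-periodic like \<open>n\<close> theta pairs \<open>\<theta>(bz;p) \<theta>(b/z;p)\<close>. Such a function is determined by its
  values at \<open>n + 1\<close> points in general position: dividing out the theta pair of one zero lowers
  the degree (the quotient is again holomorphic because the zeros of \<open>\<theta>\<close> are simple), and in
  degree \<open>0\<close> a \<open>p\<close>-periodic holomorphic function is constant by Liouville's theorem. Hence \<open>F\<close>
  equals its Lagrange-type interpolant at the nodes \<open>a q\<^sup>k\<close>, \<open>k \<le> n\<close>, built from products of
  theta shifted factorials; evaluating the basis at the nodes is an identity between shifted
  factorials, and dividing by \<open>(cz, c/z;q,p)\<^sub>n\<close> again gives the expansion of \<open>f\<close>. The nodes are in
  general position only when \<open>\<theta>(a\<^sup>2 q\<^sup>s;p) \<noteq> 0\<close> for \<open>s \<le> 2n\<close>, which fails for countably many \<open>a\<close>;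
  both sides are continuous in \<open>a\<close>, so the identity extends to all admissible \<open>a\<close>. Finally it is
  linear in \<open>f\<close>.\<close>

section \<open>The modified theta function\<close>

text \<open>For \<open>k = 1\<close> this splits off from \<open>\<theta>(x;p)\<close> the factor \<open>1 - x\<close> carrying its simple zero
  at \<open>1\<close>.\<close>
definition theta_tail :: "complex \<Rightarrow> nat \<Rightarrow> complex \<Rightarrow> complex" where
  "theta_tail p k x = (\<Prod>j. (1 - p ^ (j + k) * x) * (1 - p ^ Suc (j + k) / x))"

lemma mtheta_eq_theta_tail_0: "mtheta x p = theta_tail p 0 x"
  by (simp add: mtheta_def theta_tail_def)

lemma norm_theta_factor_minus_1_le:
  fixes p x :: complex assumes p: "norm p < 1" and x: "x \<noteq> 0"
  shows "norm ((1 - p ^ (n + k) * x) * (1 - p ^ Suc (n + k) / x) - 1)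
        \<le> (norm x + norm (p / x) + 1) * norm p ^ n"
proof -
  have e: "(1 - p ^ (n + k) * x) * (1 - p ^ Suc (n + k) / x) - 1
        = p ^ (n + k) * (- x - p / x + p ^ (n + k) * p)"
    using x by (simp add: field_simps)
  have "norm (- x - p / x + p ^ (n + k) * p) \<le> norm x + norm (p / x) + norm (p ^ (n + k) * p)"
    using norm_triangle_ineq[of "-x-p/x" "p ^ (n + k) * p"] norm_triangle_ineq4[of "-x" "p/x"] by simp
  also have "norm (p ^ (n + k) * p) \<le> 1"
    using p by (simp add: norm_mult norm_power power_le_one mult_le_one less_imp_le)
  finally have A: "norm (- x - p / x + p ^ (n + k) * p) \<le> norm x + norm (p / x) + 1" by simp
  have B: "norm p ^ (n + k) \<le> norm p ^ n"
    using p by (simp add: power_add mult_left_le power_le_one)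
  have "norm ((1 - p ^ (n + k) * x) * (1 - p ^ Suc (n + k) / x) - 1)
      = norm p ^ (n + k) * norm (- x - p / x + p ^ (n + k) * p)"
    unfolding e by (simp add: norm_mult norm_power)
  also have "\<dots> \<le> norm p ^ n * (norm x + norm (p / x) + 1)"
    by (rule mult_mono[OF B A]) auto
  finally show ?thesis by (simp add: mult.commute)
qed

lemma theta_tail_has_prod:
  fixes p x :: complex assumes p: "norm p < 1" and x: "x \<noteq> 0"
  shows "(\<lambda>j. (1 - p ^ (j + k) * x) * (1 - p ^ Suc (j + k) / x)) has_prod theta_tail p k x"
proof -
  have "summable (\<lambda>j. norm ((1 - p ^ (j + k) * x) * (1 - p ^ Suc (j + k) / x) - 1))"
  proof (rule summable_comparison_test)
    show "summable (\<lambda>j. (norm x + norm (p / x) + 1) * norm p ^ j)"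
      using p by (intro summable_mult summable_geometric) auto
  qed (use norm_theta_factor_minus_1_le[OF p x] in auto)
  then have "convergent_prod (\<lambda>j. (1 - p ^ (j + k) * x) * (1 - p ^ Suc (j + k) / x))"
    using abs_convergent_prod_conv_summable abs_convergent_prod_imp_convergent_prod by blast
  then show ?thesis unfolding theta_tail_def by (rule convergent_prod_has_prod)
qed

lemma mtheta_has_prod:
  fixes p x :: complex assumes p: "norm p < 1" and x: "x \<noteq> 0"
  shows "(\<lambda>j. (1 - p ^ j * x) * (1 - p ^ Suc j / x)) has_prod mtheta x p"
  using theta_tail_has_prod[OF p x, of 0] by (simp add: mtheta_eq_theta_tail_0)

lemma has_prod_imp_LIMSEQ_lessThan:
  fixes f :: "nat \<Rightarrow> 'a :: {real_normed_field, banach}"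
  assumes "f has_prod a"
  shows "(\<lambda>N. \<Prod>j<N. f j) \<longlonglongrightarrow> a"
proof -
  have "convergent_prod f" using assms has_prod_iff by blast
  then have "(\<lambda>n. \<Prod>i<n. f i) \<longlonglongrightarrow> prodinf f"
    using convergent_prod_LIMSEQ LIMSEQ_lessThan_iff_atMost by blast
  then show ?thesis using assms has_prod_unique by metis
qed

lemma uniform_limit_theta_tail:
  fixes p :: complex assumes p: "norm p < 1" and K: "compact K" "0 \<notin> K"
  shows "uniform_limit K (\<lambda>N x. \<Prod>j<N. (1 - p ^ (j + k) * x) * (1 - p ^ Suc (j + k) / x))
           (theta_tail p k) sequentially"
proof -
  define P where "P = (\<lambda>N x. \<Prod>j<N. (1 - p ^ (j + k) * x) * (1 - p ^ Suc (j + k) / x))"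
  obtain R where R: "\<And>x. x \<in> K \<Longrightarrow> norm x + norm (p / x) + 1 \<le> R"
  proof -
    have "compact ((\<lambda>x. norm x + norm (p / x) + 1) ` K)"
      using K by (intro compact_continuous_image continuous_intros) auto
    then obtain R where "\<forall>y\<in>(\<lambda>x. norm x + norm (p / x) + 1) ` K. norm y \<le> R"
      using compact_imp_bounded bounded_iff by blast
    then show ?thesis using that by force
  qed
  have "uniformly_convergent_on K P"
    unfolding P_def
  proof (rule uniformly_convergent_on_prod')
    show "uniformly_convergent_on K
            (\<lambda>N x. \<Sum>n<N. norm ((1 - p ^ (n + k) * x) * (1 - p ^ Suc (n + k) / x) - 1))"
    proof (rule Weierstrass_m_test'_ev)
      show "summable (\<lambda>n. R * norm p ^ n)"
        using p by (intro summable_mult summable_geometric) auto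
      show "\<forall>\<^sub>F n in sequentially. \<forall>x\<in>K.
              norm (norm ((1 - p ^ (n + k) * x) * (1 - p ^ Suc (n + k) / x) - 1)) \<le> R * norm p ^ n"
      proof (intro always_eventually allI ballI)
        fix n :: nat and x assume x: "x \<in> K"
        then have "x \<noteq> 0" using K by auto
        from norm_theta_factor_minus_1_le[OF p this, of n k] R[OF x]
        show "norm (norm ((1 - p ^ (n + k) * x) * (1 - p ^ Suc (n + k) / x) - 1)) \<le> R * norm p ^ n"
          by (smt (verit, best) mult_right_mono norm_ge_zero real_norm_def zero_le_power)
      qed
    qed
  qed (use K in \<open>auto intro!: continuous_intros\<close>)
  then obtain g where g: "uniform_limit K P g sequentially"
    by (auto simp: uniformly_convergent_on_def)
  moreover have "g x = theta_tail p k x" if x: "x \<in> K" for x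
  proof -
    have "(\<lambda>n. P n x) \<longlonglongrightarrow> g x" using g x by (metis tendsto_uniform_limitI)
    moreover have "(\<lambda>n. P n x) \<longlonglongrightarrow> theta_tail p k x"
      unfolding P_def using x K by (intro has_prod_imp_LIMSEQ_lessThan theta_tail_has_prod p) auto
    ultimately show ?thesis using LIMSEQ_unique by blast
  qed
  ultimately show ?thesis unfolding P_def by (metis (mono_tags, lifting) uniform_limit_cong')
qed

lemma holomorphic_theta_tail:
  fixes p :: complex assumes p: "norm p < 1"
  shows "theta_tail p k holomorphic_on (- {0})"
proof (rule holomorphic_uniform_sequence)
  show "(\<lambda>x. \<Prod>j<n. (1 - p ^ (j + k) * x) * (1 - p ^ Suc (j + k) / x)) holomorphic_on - {0}" for n
    by (intro holomorphic_intros) auto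
  fix x :: complex assume x: "x \<in> - {0}"
  have sub: "cball x (norm x / 2) \<subseteq> - {0}"
    using x by (auto simp: dist_norm)
  then show "\<exists>d>0. cball x d \<subseteq> - {0} \<and>
      uniform_limit (cball x d) (\<lambda>n x. \<Prod>j<n. (1 - p ^ (j + k) * x) * (1 - p ^ Suc (j + k) / x))
        (theta_tail p k) sequentially"
    using x by (intro exI[of _ "norm x / 2"] conjI uniform_limit_theta_tail p) auto
qed auto

lemma holomorphic_mtheta:
  fixes p :: complex assumes p: "norm p < 1"
  shows "(\<lambda>x. mtheta x p) holomorphic_on (- {0})"
  using holomorphic_theta_tail[OF p, of 0] by (simp add: mtheta_eq_theta_tail_0[abs_def])

lemma holomorphic_on_mtheta_compose:
  assumes p: "norm p < 1" and hf: "f holomorphic_on S" and nz: "\<And>w. w \<in> S \<Longrightarrow> f w \<noteq> 0"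
  shows "(\<lambda>w. mtheta (f w) p) holomorphic_on S"
  using holomorphic_on_compose_gen[OF hf holomorphic_mtheta[OF p], unfolded o_def] nz
  by (auto simp: image_iff)

lemma holomorphic_on_imp_isCont: "f holomorphic_on S \<Longrightarrow> open S \<Longrightarrow> w \<in> S \<Longrightarrow> isCont f w"
  by (meson analytic_at_imp_isCont holomorphic_on_imp_analytic_at)

lemma isCont_mtheta [continuous_intros]:
  assumes p: "norm p < 1" and u: "isCont u a0" and u0: "u a0 \<noteq> 0"
  shows "isCont (\<lambda>a. mtheta (u a) p) a0"
  using continuous_at_compose[OF u holomorphic_on_imp_isCont[OF holomorphic_mtheta[OF p]]] u0
  by (simp add: o_def open_Compl)

lemma mtheta_eq_0_iff:
  fixes p x :: complex assumes x: "x \<noteq> 0" and p: "p \<noteq> 0" "norm p < 1"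
  shows "mtheta x p = 0 \<longleftrightarrow> (\<exists>m::int. x = p powi m)"
proof -
  have "mtheta x p = 0 \<longleftrightarrow> 0 \<in> range (\<lambda>j. (1 - p ^ j * x) * (1 - p ^ Suc j / x))"
    by (rule has_prod_eq_0_iff[OF mtheta_has_prod[OF p(2) x]])
  also have "\<dots> \<longleftrightarrow> (\<exists>j. (1 - p ^ j * x) * (1 - p ^ Suc j / x) = 0)"
    by (metis (no_types, lifting) rangeE rangeI)
  also have "\<dots> \<longleftrightarrow> (\<exists>j. x = p powi (- int j) \<or> x = p powi int (Suc j))"
  proof -
    have "1 - p ^ j * x = 0 \<longleftrightarrow> x = inverse (p ^ j)" for j
      using p by (auto simp: field_simps)
    moreover have "1 - p ^ Suc j / x = 0 \<longleftrightarrow> x = p ^ Suc j" for j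
      using x by (auto simp: field_simps simp del: power_Suc)
    ultimately show ?thesis by (simp only: mult_eq_0_iff power_int_minus power_int_of_nat)
  qed
  also have "\<dots> \<longleftrightarrow> (\<exists>m::int. x = p powi m)"
  proof
    assume "\<exists>m::int. x = p powi m"
    then obtain m :: int where m: "x = p powi m" by blast
    show "\<exists>j. x = p powi (- int j) \<or> x = p powi int (Suc j)"
    proof (cases "m \<ge> 1")
      case True
      then show ?thesis using m by (intro exI[of _ "nat m - 1"]) simp
    next
      case False
      then show ?thesis using m by (intro exI[of _ "nat (- m)"]) simp
    qed
  qed blast
  finally show ?thesis .
qed

lemma mtheta_one: "norm p < 1 \<Longrightarrow> mtheta 1 p = 0"
  using has_prod_eq_0_iff[OF mtheta_has_prod, of p 1] by (auto intro: range_eqI[where x=0])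

lemma mtheta_self: "p \<noteq> 0 \<Longrightarrow> norm p < 1 \<Longrightarrow> mtheta p p = 0"
  using mtheta_eq_0_iff[of p p] by (metis power_int_1_right)

lemma mtheta_divide_eq_mtheta_mult:
  fixes p x :: complex assumes x: "x \<noteq> 0" and p: "p \<noteq> 0"
  shows "mtheta (1 / x) p = mtheta (p * x) p"
proof -
  have "(\<lambda>j. (1 - p ^ j * (1 / x)) * (1 - p ^ Suc j / (1 / x)))
      = (\<lambda>j. (1 - p ^ j * (p * x)) * (1 - p ^ Suc j / (p * x)))"
    using x p by (auto simp: fun_eq_iff field_simps)
  then show ?thesis by (simp add: mtheta_def)
qed

lemma prod_theta_factors_mult:
  fixes p x :: complex assumes p: "p \<noteq> 0"
  shows "(\<Prod>j<N. (1 - p ^ j * (p * x)) * (1 - p ^ Suc j / (p * x))) * ((1 - x) * (1 - p ^ N / x))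
       = (\<Prod>j<N. (1 - p ^ j * x) * (1 - p ^ Suc j / x)) * ((1 - p ^ N * x) * (1 - 1 / x))"
proof (induction N)
  case (Suc N)
  have e1: "1 - p ^ N * (p * x) = 1 - p ^ Suc N * x"
    by (simp add: algebra_simps)
  have e2: "1 - p ^ Suc N / (p * x) = 1 - p ^ N / x"
    using p by simp
  have "(\<Prod>j<Suc N. (1 - p ^ j * (p * x)) * (1 - p ^ Suc j / (p * x))) * ((1 - x) * (1 - p ^ Suc N / x))
      = ((\<Prod>j<N. (1 - p ^ j * (p * x)) * (1 - p ^ Suc j / (p * x))) * ((1 - x) * (1 - p ^ N / x)))
        * ((1 - p ^ Suc N * x) * (1 - p ^ Suc N / x))"
    unfolding prod.lessThan_Suc e1 e2 by (simp only: mult_ac)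
  also have "\<dots> = (\<Prod>j<Suc N. (1 - p ^ j * x) * (1 - p ^ Suc j / x)) * ((1 - p ^ Suc N * x) * (1 - 1 / x))"
    unfolding Suc.IH prod.lessThan_Suc by (simp only: mult_ac)
  finally show ?case .
qed simp

lemma mtheta_mult_self:
  fixes p x :: complex assumes x: "x \<noteq> 0" and p: "p \<noteq> 0" "norm p < 1"
  shows "mtheta (p * x) p = - mtheta x p / x"
proof (cases "x = 1")
  case True
  then show ?thesis using p by (simp add: mtheta_one mtheta_self)
next
  case False
  have px: "p * x \<noteq> 0" using x p by auto
  have "(\<lambda>N. (\<Prod>j<N. (1 - p ^ j * (p * x)) * (1 - p ^ Suc j / (p * x))) * ((1 - x) * (1 - p ^ N / x)))
       \<longlonglongrightarrow> mtheta (p * x) p * ((1 - x) * (1 - 0 / x))"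
    by (intro tendsto_intros has_prod_imp_LIMSEQ_lessThan mtheta_has_prod p px x LIMSEQ_power_zero)
  moreover have "(\<lambda>N. (\<Prod>j<N. (1 - p ^ j * (p * x)) * (1 - p ^ Suc j / (p * x))) * ((1 - x) * (1 - p ^ N / x)))
       \<longlonglongrightarrow> mtheta x p * ((1 - 0 * x) * (1 - 1 / x))"
    unfolding prod_theta_factors_mult[OF p(1)]
    by (intro tendsto_intros has_prod_imp_LIMSEQ_lessThan mtheta_has_prod p LIMSEQ_power_zero) (use x in auto)
  ultimately have "mtheta (p * x) p * ((1 - x) * (1 - 0 / x)) = mtheta x p * ((1 - 0 * x) * (1 - 1 / x))"
    by (rule LIMSEQ_unique)
  then have "mtheta (p * x) p * (1 - x) = mtheta x p * (1 - 1 / x)"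
    by simp
  also have "\<dots> = (- mtheta x p / x) * (1 - x)"
    using x by (simp add: field_simps)
  finally show ?thesis using False by (metis mult_cancel_right right_minus_eq)
qed

lemma mtheta_divide:
  fixes p x :: complex assumes x: "x \<noteq> 0" and p: "p \<noteq> 0" "norm p < 1"
  shows "mtheta (1 / x) p = - mtheta x p / x"
  using mtheta_divide_eq_mtheta_mult[OF x p(1)] mtheta_mult_self[OF x p] by simp

lemma mtheta_eq_theta_tail_mult:
  fixes p x :: complex assumes x: "x \<noteq> 0" and p: "norm p < 1"
  shows "mtheta x p = theta_tail p 1 x * ((1 - x) * (1 - p / x))"
proof -
  have "(\<lambda>j. (1 - p ^ Suc j * x) * (1 - p ^ Suc (Suc j) / x)) has_prod theta_tail p 1 x"
    using theta_tail_has_prod[OF p x, of 1] by simp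
  from has_prod_Suc_imp[of "\<lambda>j. (1 - p ^ j * x) * (1 - p ^ Suc j / x)", OF this]
  have "(\<lambda>j. (1 - p ^ j * x) * (1 - p ^ Suc j / x))
               has_prod (theta_tail p 1 x * ((1 - x) * (1 - p / x)))"
    by simp
  with mtheta_has_prod[OF p x] show ?thesis using has_prod_unique2 by blast
qed

lemma theta_tail_1_1_nonzero:
  fixes p :: complex assumes p: "norm p < 1"
  shows "theta_tail p 1 1 \<noteq> 0"
proof -
  have "norm (p ^ Suc m) < 1" for m
    using p power_less_one_iff[of "norm p" "Suc m"] by (simp add: norm_power del: power_Suc)
  then have "p ^ Suc m \<noteq> 1" for m by (metis norm_one order.irrefl)
  then have "0 \<notin> range (\<lambda>j. (1 - p ^ (j + 1) * 1) * (1 - p ^ Suc (j + 1) / 1))"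
    by (auto simp del: power_Suc)
  with has_prod_eq_0_iff[OF theta_tail_has_prod[OF p, of 1 1]] show ?thesis by simp
qed

lemma deriv_mtheta_one:
  fixes p :: complex assumes p: "norm p < 1"
  shows "deriv (\<lambda>x. mtheta x p) 1 = - ((1 - p) * theta_tail p 1 1)"
proof -
  have "(theta_tail p 1 has_field_derivative deriv (theta_tail p 1) 1) (at 1)"
    by (rule holomorphic_derivI[OF holomorphic_theta_tail[OF p]]) auto
  moreover have "((\<lambda>x. (1 - x) * (1 - p / x)) has_field_derivative (- (1 - p))) (at (1::complex))"
    by (rule derivative_eq_intros refl | simp)+
  ultimately have "((\<lambda>x. theta_tail p 1 x * ((1 - x) * (1 - p / x))) has_field_derivative
      - ((1 - p) * theta_tail p 1 1)) (at 1)"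
    using DERIV_mult by (fastforce simp: algebra_simps)
  then have "((\<lambda>x. mtheta x p) has_field_derivative (- ((1 - p) * theta_tail p 1 1))) (at 1)"
    by (rule has_field_derivative_transform_within_open[of _ _ _ "- {0}"])
       (use mtheta_eq_theta_tail_mult[OF _ p] in auto)
  then show ?thesis by (rule DERIV_imp_deriv)
qed

lemma deriv_mtheta_mult_self:
  fixes p x :: complex assumes x: "x \<noteq> 0" and p: "p \<noteq> 0" "norm p < 1" and z: "mtheta x p = 0"
  shows "p * deriv (\<lambda>x. mtheta x p) (p * x) = - deriv (\<lambda>x. mtheta x p) x / x"
proof -
  define T where "T = (\<lambda>x. mtheta x p)"
  have dT: "(T has_field_derivative deriv T y) (at y)" if "y \<noteq> 0" for y
    unfolding T_def by (rule holomorphic_derivI[OF holomorphic_mtheta[OF p(2)]]) (use that in auto)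
  have "((\<lambda>y. T (p * y)) has_field_derivative (deriv T (p * x) * p)) (at x)"
    by (rule DERIV_chain2[OF dT]) (use x p in \<open>auto intro!: derivative_eq_intros\<close>)
  moreover have "((\<lambda>y. - T y / y) has_field_derivative
       (- deriv T x * x - (- T x) * 1) / (x * x)) (at x)"
    by (intro DERIV_divide DERIV_minus dT DERIV_ident x)
  then have "((\<lambda>y. T (p * y)) has_field_derivative (- deriv T x * x - (- T x) * 1) / (x * x)) (at x)"
    by (rule has_field_derivative_transform_within_open[of _ _ _ "- {0}"])
       (use x mtheta_mult_self[OF _ p] in \<open>auto simp: T_def\<close>)
  ultimately have "deriv T (p * x) * p = (- deriv T x * x - (- T x) * 1) / (x * x)"
    using DERIV_unique by blast
  then show ?thesis using x z by (simp add: T_def field_simps)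
qed

lemma deriv_mtheta_power_nonzero:
  fixes p :: complex assumes p: "p \<noteq> 0" "norm p < 1"
  shows "deriv (\<lambda>x. mtheta x p) (p ^ n) \<noteq> 0 \<and> deriv (\<lambda>x. mtheta x p) (inverse (p ^ n)) \<noteq> 0"
proof (induction n)
  case 0
  have "1 - p \<noteq> 0" using p by auto
  then show ?case using deriv_mtheta_one[OF p(2)] theta_tail_1_1_nonzero[OF p(2)] by simp
next
  case (Suc n)
  have z: "mtheta (p ^ n) p = 0"
    using mtheta_eq_0_iff[OF _ p, of "p ^ n"] p by (metis power_int_of_nat power_not_zero)
  have "p * deriv (\<lambda>x. mtheta x p) (p * p ^ n) = - deriv (\<lambda>x. mtheta x p) (p ^ n) / p ^ n"
    by (rule deriv_mtheta_mult_self[OF _ p z]) (use p in simp)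
  then have A: "deriv (\<lambda>x. mtheta x p) (p ^ Suc n) \<noteq> 0"
    using Suc.IH p by auto
  define y where "y = inverse (p ^ Suc n)"
  have y0: "y \<noteq> 0" and py: "p * y = inverse (p ^ n)"
    using p by (simp_all add: y_def field_simps)
  have "y = p powi (- int (Suc n))"
    unfolding y_def by (simp only: power_int_minus power_int_of_nat)
  then have "mtheta y p = 0" using mtheta_eq_0_iff[OF y0 p] by blast
  then have "p * deriv (\<lambda>x. mtheta x p) (p * y) = - deriv (\<lambda>x. mtheta x p) y / y"
    by (rule deriv_mtheta_mult_self[OF y0 p])
  then have "deriv (\<lambda>x. mtheta x p) y \<noteq> 0"
    using Suc.IH p unfolding py by auto
  with A show ?case by (simp add: y_def)
qed

lemma deriv_mtheta_nonzero:
  fixes p x :: complex assumes x: "x \<noteq> 0" and p: "p \<noteq> 0" "norm p < 1" and z: "mtheta x p = 0"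
  shows "deriv (\<lambda>x. mtheta x p) x \<noteq> 0"
proof -
  obtain m :: int where m: "x = p powi m" using mtheta_eq_0_iff[OF x p] z by blast
  show ?thesis
  proof (cases "m \<ge> 0")
    case True
    then have "x = p ^ nat m" using m by (metis nat_0_le power_int_of_nat)
    then show ?thesis using deriv_mtheta_power_nonzero[OF p] by simp
  next
    case False
    then have "x = inverse (p ^ nat (- m))"
      using m by (metis minus_minus nat_0_le neg_0_le_iff_le nle_le power_int_minus power_int_of_nat)
    then show ?thesis using deriv_mtheta_power_nonzero[OF p] by simp
  qed
qed

section \<open>Theta shifted factorials\<close>

lemma tpoch_add: "tpoch a q p (m + l) = tpoch a q p m * tpoch (a * q ^ m) q p l"
  by (induction l) (simp_all add: tpoch_def power_add mult_ac)

lemma tpoch_nonzero_le: "tpoch a q p n \<noteq> 0 \<Longrightarrow> k \<le> n \<Longrightarrow> tpoch a q p k \<noteq> 0"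
  using tpoch_add[of a q p k "n - k"] by auto

lemma mtheta_nonzero_if_tpoch_nonzero: "tpoch a q p n \<noteq> 0 \<Longrightarrow> i < n \<Longrightarrow> mtheta (a * q ^ i) p \<noteq> 0"
  by (auto simp: tpoch_def)

lemma tpoch_eq_0_if_mtheta_eq_0: "i < n \<Longrightarrow> mtheta (a * q ^ i) p = 0 \<Longrightarrow> tpoch a q p n = 0"
  by (auto simp: tpoch_def intro: prod_zero)

lemma prod_minus_mult_power: "(\<Prod>i<j. - (y * q ^ i)) = (- y) ^ j * (\<Prod>i<j. (q::complex) ^ i)"
  by (induction j) (auto simp: mult_ac)

text \<open>Apply \<open>\<theta>(1/u;p) = -\<theta>(u;p)/u\<close> to every factor and reverse the order of the product.\<close>
lemma tpoch_reflect:
  assumes q: "q \<noteq> 0" and x: "x \<noteq> 0" and yx: "y * x * q ^ j = q" and p: "p \<noteq> 0" "norm p < 1"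
  shows "tpoch y q p j = (\<Prod>i<j. - (y * q ^ i)) * tpoch x q p j"
proof -
  have y: "y \<noteq> 0" using yx q by auto
  have f: "mtheta (y * q ^ i) p = - (y * q ^ i) * mtheta (x * q ^ (j - Suc i)) p" if i: "i < j" for i
  proof -
    have u: "y * q ^ i \<noteq> 0" using y q by simp
    have "q ^ j = q ^ (j - Suc i) * q ^ i * q" using i
      by (metis Suc_leI le_add_diff_inverse2 power_Suc power_add mult.commute mult.left_commute)
    then have "1 / (y * q ^ i) = x * q ^ (j - Suc i)"
      using yx q y by (simp add: field_simps)
    with mtheta_divide[OF u p] show ?thesis using u by (simp add: field_simps)
  qed
  have "tpoch y q p j = (\<Prod>i<j. - (y * q ^ i) * mtheta (x * q ^ (j - Suc i)) p)"
    unfolding tpoch_def using f by (intro prod.cong) auto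
  also have "\<dots> = (\<Prod>i<j. - (y * q ^ i)) * (\<Prod>i<j. mtheta (x * q ^ (j - Suc i)) p)"
    by (rule prod.distrib)
  also have "(\<Prod>i<j. mtheta (x * q ^ (j - Suc i)) p) = tpoch x q p j"
    unfolding tpoch_def by (rule prod.nat_diff_reindex)
  finally show ?thesis .
qed

lemma isCont_tpoch [continuous_intros]:
  assumes p: "norm p < 1" and q: "q \<noteq> 0" and u: "isCont u a0" and u0: "u a0 \<noteq> 0"
  shows "isCont (\<lambda>a. tpoch (u a) q p m) a0"
  unfolding tpoch_def by (intro continuous_prod isCont_mtheta p continuous_intros u) (use q u0 in auto)

section \<open>Even theta functions\<close>

definition even_theta :: "complex \<Rightarrow> nat \<Rightarrow> (complex \<Rightarrow> complex) \<Rightarrow> bool" where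
  "even_theta p n G \<longleftrightarrow> G holomorphic_on (- {0}) \<and> (\<forall>w. w \<noteq> 0 \<longrightarrow> G (1 / w) = G w) \<and>
     (\<forall>w. w \<noteq> 0 \<longrightarrow> G (p * w) = inverse (p ^ n) * inverse (w ^ (2 * n)) * G w)"

lemma even_theta_scale: "even_theta p n G \<Longrightarrow> even_theta p n (\<lambda>w. c * G w)"
  by (auto simp: even_theta_def holomorphic_intros)

lemma even_theta_add: "even_theta p n G \<Longrightarrow> even_theta p n H \<Longrightarrow> even_theta p n (\<lambda>w. G w + H w)"
  by (auto simp: even_theta_def holomorphic_intros algebra_simps)

lemma even_theta_diff: "even_theta p n G \<Longrightarrow> even_theta p n H \<Longrightarrow> even_theta p n (\<lambda>w. G w - H w)"
  by (auto simp: even_theta_def holomorphic_intros algebra_simps)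

lemma even_theta_sum:
  "finite A \<Longrightarrow> (\<And>k. k \<in> A \<Longrightarrow> even_theta p n (G k)) \<Longrightarrow> even_theta p n (\<lambda>w. \<Sum>k\<in>A. G k w)"
proof (induction A rule: finite_induct)
  case empty
  then show ?case by (simp add: even_theta_def)
next
  case (insert x F)
  then show ?case using even_theta_add[of p n "G x" "\<lambda>w. \<Sum>k\<in>F. G k w"] by simp
qed

lemma even_theta_mult:
  "even_theta p m G \<Longrightarrow> even_theta p k H \<Longrightarrow> even_theta p (m + k) (\<lambda>w. G w * H w)"
  by (auto simp: even_theta_def holomorphic_intros power_add field_simps)

lemma mtheta_pair_mult_self:
  assumes p: "p \<noteq> 0" "norm p < 1" and b: "b \<noteq> 0" and w: "w \<noteq> 0"
  shows "mtheta (b * (p * w)) p * mtheta (b / (p * w)) p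
       = inverse p * inverse (w ^ 2) * (mtheta (b * w) p * mtheta (b / w) p)"
proof -
  have a: "mtheta (b * (p * w)) p = - mtheta (b * w) p / (b * w)"
    using mtheta_mult_self[of "b * w" p] p b w by (simp add: mult_ac)
  have "mtheta (p * (b / (p * w))) p = - mtheta (b / (p * w)) p / (b / (p * w))"
    using mtheta_mult_self[of "b / (p * w)" p] p b w by simp
  then have b': "mtheta (b / (p * w)) p = - (b / (p * w)) * mtheta (b / w) p"
    using p b w by (simp add: field_simps)
  show ?thesis unfolding a b' using p b w by (simp add: field_simps power2_eq_square)
qed

lemma holomorphic_mtheta_pair:
  assumes p: "norm p < 1" and b: "b \<noteq> 0"
  shows "(\<lambda>w. mtheta (b * w) p * mtheta (b / w) p) holomorphic_on - {0}"
  using b by (auto intro!: holomorphic_intros holomorphic_on_mtheta_compose p)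

lemma even_theta_mtheta_pair:
  assumes p: "p \<noteq> 0" "norm p < 1" and b: "b \<noteq> 0"
  shows "even_theta p 1 (\<lambda>w. mtheta (b * w) p * mtheta (b / w) p)"
  unfolding even_theta_def
proof (intro conjI allI impI holomorphic_mtheta_pair[OF p(2) b])
  fix w :: complex assume "w \<noteq> 0"
  then show "mtheta (b * (1 / w)) p * mtheta (b / (1 / w)) p = mtheta (b * w) p * mtheta (b / w) p"
    by (simp add: mult.commute)
  show "mtheta (b * (p * w)) p * mtheta (b / (p * w)) p
      = inverse (p ^ 1) * inverse (w ^ (2 * 1)) * (mtheta (b * w) p * mtheta (b / w) p)"
    using mtheta_pair_mult_self[OF p b \<open>w \<noteq> 0\<close>] by simp
qed

lemma even_theta_tpoch_pair:
  assumes p: "p \<noteq> 0" "norm p < 1" and b: "b \<noteq> 0" and q: "q \<noteq> 0"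
  shows "even_theta p m (\<lambda>w. tpoch (b * w) q p m * tpoch (b / w) q p m)"
proof (induction m)
  case 0
  then show ?case by (simp add: tpoch_def even_theta_def)
next
  case (Suc m)
  have "(\<lambda>w. tpoch (b * w) q p (Suc m) * tpoch (b / w) q p (Suc m))
     = (\<lambda>w. (tpoch (b * w) q p m * tpoch (b / w) q p m)
            * (mtheta ((b * q ^ m) * w) p * mtheta ((b * q ^ m) / w) p))"
    by (auto simp: tpoch_def fun_eq_iff mult_ac)
  moreover have "b * q ^ m \<noteq> 0" using b q by simp
  ultimately show ?case using even_theta_mult[OF Suc.IH even_theta_mtheta_pair[OF p]] by simp
qed

lemma even_theta_zero_mult_power:
  assumes G: "even_theta p n G" and p: "p \<noteq> 0" and y: "y \<noteq> 0" "G y = 0"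
  shows "G (p ^ k * y) = 0 \<and> G (inverse (p ^ k) * y) = 0"
proof (induction k)
  case (Suc k)
  have per: "\<And>w. w \<noteq> 0 \<Longrightarrow> G (p * w) = inverse (p ^ n) * inverse (w ^ (2 * n)) * G w"
    using G by (auto simp: even_theta_def)
  have "G (p ^ Suc k * y) = inverse (p ^ n) * inverse ((p ^ k * y) ^ (2 * n)) * G (p ^ k * y)"
    using per[of "p ^ k * y"] p y by (simp add: mult.assoc)
  moreover have "G (p * (inverse (p ^ Suc k) * y))
      = inverse (p ^ n) * inverse ((inverse (p ^ Suc k) * y) ^ (2 * n)) * G (inverse (p ^ Suc k) * y)"
    using per[of "inverse (p ^ Suc k) * y"] p y by simp
  moreover have "p * (inverse (p ^ Suc k) * y) = inverse (p ^ k) * y" using p by (simp add: field_simps)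
  moreover have "inverse (p ^ n) * inverse ((inverse (p ^ Suc k) * y) ^ (2 * n)) \<noteq> 0"
    using p y by simp
  ultimately show ?case using Suc.IH by (metis mult_eq_0_iff)
qed (use y in simp)

lemma even_theta_zero_mult_powi:
  assumes G: "even_theta p n G" and p: "p \<noteq> 0" and y: "y \<noteq> 0" "G y = 0"
  shows "G (p powi m * y) = 0"
proof (cases "m \<ge> 0")
  case True
  then have "p powi m = p ^ nat m" by (metis nat_0_le power_int_of_nat)
  then show ?thesis using even_theta_zero_mult_power[OF G p y] by simp
next
  case False
  then have "p powi m = inverse (p ^ nat (- m))"
    by (metis minus_minus nat_0_le neg_0_le_iff_le nle_le power_int_minus power_int_of_nat)
  then show ?thesis using even_theta_zero_mult_power[OF G p y] by simp
qed

lemma periodic_mult_power: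
  fixes G :: "complex \<Rightarrow> complex" and p :: complex
  assumes p: "p \<noteq> 0" and per: "\<And>w. w \<noteq> 0 \<Longrightarrow> G (p * w) = G w" and w: "w \<noteq> 0"
  shows "G (p ^ k * w) = G w \<and> G (inverse (p ^ k) * w) = G w"
proof (induction k)
  case (Suc k)
  have "G (p ^ Suc k * w) = G (p ^ k * w)"
    using per[of "p ^ k * w"] p w by (simp add: mult.assoc)
  moreover have "G (p * (inverse (p ^ Suc k) * w)) = G (inverse (p ^ Suc k) * w)"
    using per[of "inverse (p ^ Suc k) * w"] p w by simp
  moreover have "p * (inverse (p ^ Suc k) * w) = inverse (p ^ k) * w"
    using p by (simp add: field_simps)
  ultimately show ?case using Suc.IH by metis
qed simp

lemma periodic_value_in_annulus:
  fixes G :: "complex \<Rightarrow> complex" and p :: complex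
  assumes p: "p \<noteq> 0" "norm p < 1" and per: "\<And>w. w \<noteq> 0 \<Longrightarrow> G (p * w) = G w" and u: "u \<noteq> 0"
  obtains v where "norm p \<le> norm v" "norm v \<le> 1" "G v = G u"
proof -
  define L where "L = - ln (norm p)"
  have L: "L > 0" and np: "norm p = exp (- L)" using p by (simp_all add: L_def)
  define k where "k = ceiling (ln (norm u) / L)"
  have k1: "ln (norm u) \<le> k * L" using L by (simp add: k_def pos_divide_le_eq[symmetric])
  have "of_int k < ln (norm u) / L + 1" unfolding k_def by linarith
  then have k2: "k * L < ln (norm u) + L" using L by (simp add: field_simps)
  show ?thesis
  proof (cases "k \<ge> 0")
    case True
    define v where "v = p ^ nat k * u"
    have "norm p ^ nat k = exp (- (k * L))"
      using True by (simp add: np exp_of_nat_mult[symmetric])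
    then have "norm v = exp (ln (norm u) - k * L)"
      using u by (simp add: v_def norm_mult norm_power exp_diff exp_minus field_simps)
    moreover have "G v = G u" using periodic_mult_power[of p G u, OF p(1) per u] by (simp add: v_def)
    ultimately show ?thesis using k1 k2 np by (intro that[of v]) simp_all
  next
    case False
    define v where "v = inverse (p ^ nat (- k)) * u"
    have "norm p ^ nat (- k) = exp (k * L)"
      using False by (simp add: np exp_of_nat_mult[symmetric])
    then have "norm v = exp (ln (norm u) - k * L)"
      using u by (simp add: v_def norm_mult norm_power norm_inverse norm_divide exp_diff field_simps)
    moreover have "G v = G u" using periodic_mult_power[of p G u, OF p(1) per u] by (simp add: v_def)
    ultimately show ?thesis using k1 k2 np by (intro that[of v]) simp_all
  qed
qed

text \<open>By \<open>periodic_value_in_annulus\<close> the entire function \<open>s \<mapsto> G (exp s)\<close> is bounded by the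
  maximum of \<open>G\<close> on a compact annulus.\<close>
lemma holomorphic_periodic_constant:
  fixes G :: "complex \<Rightarrow> complex" and p :: complex
  assumes p: "p \<noteq> 0" "norm p < 1" and hol: "G holomorphic_on (- {0})"
    and per: "\<And>w. w \<noteq> 0 \<Longrightarrow> G (p * w) = G w" and w: "w \<noteq> 0" and w1: "w1 \<noteq> 0"
  shows "G w = G w1"
proof -
  define A where "A = {w::complex. norm p \<le> norm w \<and> norm w \<le> 1}"
  have "A = cball 0 1 - ball 0 (norm p)" by (auto simp: A_def)
  then have "compact A" by (simp add: compact_diff)
  moreover have "A \<subseteq> - {0}" using p by (auto simp: A_def)
  then have "continuous_on A G"
    using holomorphic_on_imp_continuous_on[OF hol] continuous_on_subset by blast
  ultimately have "compact (G ` A)" using compact_continuous_image by blast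
  then obtain M where M: "\<And>v. v \<in> A \<Longrightarrow> norm (G v) \<le> M"
    using compact_imp_bounded bounded_iff by (metis imageI)
  have "bounded (range (\<lambda>s. G (exp s)))"
    unfolding bounded_iff
  proof (intro exI ballI)
    fix y assume "y \<in> range (\<lambda>s. G (exp s))"
    then obtain s where s: "y = G (exp s)" by auto
    obtain v where "v \<in> A" "G v = G (exp s)"
      using periodic_value_in_annulus[where G = G and u = "exp s", OF p per] by (auto simp: A_def)
    then show "norm y \<le> M" using M[of v] s by simp
  qed
  moreover have "(\<lambda>s. G (exp s)) holomorphic_on UNIV"
    by (rule holomorphic_on_compose_gen[unfolded o_def, OF holomorphic_on_exp hol]) auto
  ultimately obtain c where c: "\<And>s. G (exp s) = c"
    using Liouville_theorem by (auto simp: constant_on_def)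
  show ?thesis using c[of "Ln w"] c[of "Ln w1"] w w1 by (simp add: exp_Ln)
qed

section \<open>Division by theta pairs\<close>

lemma eq_if_isCont_eventually_eq:
  fixes f g :: "'a :: {perfect_space, t2_space} \<Rightarrow> 'b :: t2_space"
  assumes "isCont f w0" "isCont g w0" "eventually (\<lambda>w. f w = g w) (at w0)"
  shows "f w0 = g w0"
proof -
  have "(f \<longlongrightarrow> g w0) (at w0)"
    using Lim_transform_eventually[OF assms(2)[unfolded isCont_def]] assms(3)
    by (simp add: eventually_mono)
  with assms(1) show ?thesis using tendsto_unique[OF trivial_limit_at] isCont_def by blast
qed

lemma eventually_nonzero_simple_zeros:
  fixes D :: "complex \<Rightarrow> complex"
  assumes S: "open S" and hD: "D holomorphic_on S" and w0: "w0 \<in> S"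
    and simple: "\<And>w. w \<in> S \<Longrightarrow> D w = 0 \<Longrightarrow> deriv D w \<noteq> 0"
  shows "eventually (\<lambda>w. w \<in> S \<and> D w \<noteq> 0) (at w0)"
proof -
  have "eventually (\<lambda>w. w \<in> S) (at w0)"
    using S w0 eventually_at_topological by blast
  moreover have "eventually (\<lambda>w. D w \<noteq> 0) (at w0)"
  proof (cases "D w0 = 0")
    case False
    then show ?thesis
      using holomorphic_on_imp_isCont[OF hD S w0] tendsto_imp_eventually_ne isCont_def by blast
  next
    case True
    have "((\<lambda>w. (D w - D w0) / (w - w0)) \<longlongrightarrow> deriv D w0) (at w0)"
      using holomorphic_derivI[OF hD S w0] has_field_derivative_iff by blast
    then have "eventually (\<lambda>w. (D w - D w0) / (w - w0) \<noteq> 0) (at w0)"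
      using simple[OF w0 True] by (rule tendsto_imp_eventually_ne)
    then show ?thesis using True by (auto elim: eventually_mono)
  qed
  ultimately show ?thesis by (auto elim: eventually_elim2)
qed

text \<open>The quotient \<open>G / D\<close>, completed at the zeros of \<open>D\<close> by l'Hopital's rule.\<close>
definition simple_zero_quotient ::
    "(complex \<Rightarrow> complex) \<Rightarrow> (complex \<Rightarrow> complex) \<Rightarrow> complex \<Rightarrow> complex" where
  "simple_zero_quotient G D w = (if D w = 0 then deriv G w / deriv D w else G w / D w)"

lemma tendsto_simple_zero_quotient:
  fixes G D :: "complex \<Rightarrow> complex"
  assumes S: "open S" and hG: "G holomorphic_on S" and hD: "D holomorphic_on S" and w0: "w0 \<in> S"
    and zeros: "\<And>w. w \<in> S \<Longrightarrow> D w = 0 \<Longrightarrow> G w = 0 \<and> deriv D w \<noteq> 0"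
  shows "(simple_zero_quotient G D \<longlongrightarrow> simple_zero_quotient G D w0) (at w0)"
proof -
  have "eventually (\<lambda>w. w \<in> S \<and> D w \<noteq> 0) (at w0)"
    by (rule eventually_nonzero_simple_zeros[OF S hD w0]) (use zeros in blast)
  then have ev: "eventually (\<lambda>w. G w / D w = simple_zero_quotient G D w) (at w0)"
    by (auto simp: simple_zero_quotient_def elim: eventually_mono)
  show ?thesis
  proof (cases "D w0 = 0")
    case True
    have "((\<lambda>w. G w / D w) \<longlongrightarrow> deriv G w0 / deriv D w0) (at w0)"
      by (rule lhopital_complex_simple[OF holomorphic_derivI[OF hG S w0] holomorphic_derivI[OF hD S w0]])
         (use zeros[OF w0 True] True in auto)
    then show ?thesis using True ev by (simp add: simple_zero_quotient_def Lim_transform_eventually)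
  next
    case False
    have "isCont (\<lambda>w. G w / D w) w0"
      using holomorphic_on_imp_isCont[OF hG S w0] holomorphic_on_imp_isCont[OF hD S w0] False
      by (intro continuous_intros) auto
    then show ?thesis
      using False ev by (simp add: simple_zero_quotient_def isCont_def Lim_transform_eventually)
  qed
qed

text \<open>Each zero of \<open>D\<close> is isolated and a removable singularity of the quotient.\<close>
lemma holomorphic_simple_zero_quotient:
  fixes G D :: "complex \<Rightarrow> complex"
  assumes S: "open S" and hG: "G holomorphic_on S" and hD: "D holomorphic_on S"
    and zeros: "\<And>w. w \<in> S \<Longrightarrow> D w = 0 \<Longrightarrow> G w = 0 \<and> deriv D w \<noteq> 0"
  shows "simple_zero_quotient G D holomorphic_on S"
proof -
  have "simple_zero_quotient G D analytic_on S"
    unfolding analytic_on_def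
  proof
    fix w0 assume w0: "w0 \<in> S"
    obtain e where e: "e > 0" "\<And>w. w \<noteq> w0 \<Longrightarrow> dist w w0 < e \<Longrightarrow> w \<in> S \<and> D w \<noteq> 0"
      using eventually_nonzero_simple_zeros[OF S hD w0] zeros unfolding eventually_at by blast
    obtain e' where e': "e' > 0" "ball w0 e' \<subseteq> S" using S w0 open_contains_ball by blast
    define r where "r = min e e'"
    have r: "r > 0" "ball w0 r \<subseteq> S" and nz: "\<And>w. w \<in> ball w0 r - {w0} \<Longrightarrow> D w \<noteq> 0"
      using e e' by (auto simp: r_def dist_commute)
    have "(\<lambda>w. G w / D w) holomorphic_on (ball w0 r - {w0})"
      using r nz
      by (intro holomorphic_on_divide holomorphic_on_subset[OF hG] holomorphic_on_subset[OF hD]) auto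
    then have "simple_zero_quotient G D holomorphic_on (ball w0 r - {w0})"
      by (rule holomorphic_transform) (use nz in \<open>auto simp: simple_zero_quotient_def\<close>)
    moreover note lim = tendsto_simple_zero_quotient[OF S hG hD w0 zeros]
    have "simple_zero_quotient G D holomorphic_on ball w0 r"
    proof (rule no_isolated_singularity'[of "{w0}"])
      show "(simple_zero_quotient G D \<longlongrightarrow> simple_zero_quotient G D z) (at z within ball w0 r)"
        if "z \<in> {w0}" for z
        using lim that tendsto_within_subset by blast
    qed (use calculation in auto)
    then show "\<exists>e>0. simple_zero_quotient G D holomorphic_on ball w0 e" using r by blast
  qed
  then show ?thesis by (rule analytic_imp_holomorphic)
qed

lemma mtheta_pair_zero_simple:
  assumes p: "p \<noteq> 0" "norm p < 1" and y: "y \<noteq> 0" "mtheta (y ^ 2) p \<noteq> 0"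
    and w: "w \<noteq> 0" and zero: "mtheta (y * w) p * mtheta (y / w) p = 0"
  shows "deriv (\<lambda>w. mtheta (y * w) p * mtheta (y / w) p) w \<noteq> 0"
proof -
  define T where "T = (\<lambda>x. mtheta x p)"
  have dT: "(T has_field_derivative deriv T x) (at x)" if "x \<noteq> 0" for x
    unfolding T_def by (rule holomorphic_derivI[OF holomorphic_mtheta[OF p(2)]]) (use that in auto)
  have d1: "((\<lambda>w. T (y * w)) has_field_derivative deriv T (y * w) * y) (at w)"
    by (rule DERIV_chain2[OF dT]) (use y w in \<open>auto intro!: derivative_eq_intros\<close>)
  have d2: "((\<lambda>w. T (y / w)) has_field_derivative deriv T (y / w) * (- y / w ^ 2)) (at w)"
  proof (rule DERIV_chain2[OF dT])
    show "((\<lambda>w. y / w) has_field_derivative - y / w\<^sup>2) (at w)"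
      using w by (auto intro!: derivative_eq_intros simp: power2_eq_square field_simps)
  qed (use y w in auto)
  have "deriv (\<lambda>w. T (y * w) * T (y / w)) w
      = deriv T (y * w) * y * T (y / w) + T (y * w) * (deriv T (y / w) * (- y / w ^ 2))"
    using DERIV_imp_deriv[OF DERIV_mult[OF d1 d2]] by (simp add: algebra_simps)
  moreover have "\<not> (T (y * w) = 0 \<and> T (y / w) = 0)"
  proof
    assume "T (y * w) = 0 \<and> T (y / w) = 0"
    then obtain m1 m2 :: int where m: "y * w = p powi m1" "y / w = p powi m2"
      using mtheta_eq_0_iff[of "y * w" p] mtheta_eq_0_iff[of "y / w" p] p y w by (auto simp: T_def)
    have "y ^ 2 = (y * w) * (y / w)" using w by (simp add: power2_eq_square)
    also have "\<dots> = p powi (m1 + m2)" using m p by (simp add: power_int_add)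
    finally show False using mtheta_eq_0_iff[of "y ^ 2" p] p y by auto
  qed
  moreover have "deriv T (y * w) \<noteq> 0" if "T (y * w) = 0"
    using deriv_mtheta_nonzero[OF _ p] that y w by (simp add: T_def)
  moreover have "deriv T (y / w) \<noteq> 0" if "T (y / w) = 0"
    using deriv_mtheta_nonzero[OF _ p] that y w by (simp add: T_def)
  ultimately show ?thesis using zero y w unfolding T_def by auto
qed

text \<open>The zeros of \<open>\<theta>(yw;p) \<theta>(y/w;p)\<close> are the points \<open>w\<^sup>\<plusminus>\<^sup>1 \<in> p\<^sup>\<int> y\<close>.\<close>
lemma even_theta_zero_at_mtheta_pair_zero:
  assumes p: "p \<noteq> 0" "norm p < 1" and G: "even_theta p n G" and y: "y \<noteq> 0" "G y = 0"
    and w: "w \<noteq> 0" "mtheta (y * w) p * mtheta (y / w) p = 0"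
  shows "G w = 0"
proof -
  obtain m :: int where "y * w = p powi m \<or> y / w = p powi m"
    using mtheta_eq_0_iff[of "y * w" p] mtheta_eq_0_iff[of "y / w" p] p y w by auto
  then have "1 / w = p powi (- m) * y \<or> w = p powi (- m) * y"
    using w y p by (auto simp: power_int_minus field_simps)
  then show ?thesis
    using even_theta_zero_mult_powi[OF G p(1) y] G w by (auto simp: even_theta_def)
qed

lemma even_theta_divide:
  assumes p: "p \<noteq> 0" "norm p < 1" and G: "even_theta p (Suc n) G"
    and y: "y \<noteq> 0" "mtheta (y ^ 2) p \<noteq> 0" "G y = 0"
  obtains H where "even_theta p n H" "\<And>w. w \<noteq> 0 \<Longrightarrow> G w = H w * (mtheta (y * w) p * mtheta (y / w) p)"
proof
  define D where "D = (\<lambda>w. mtheta (y * w) p * mtheta (y / w) p)"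
  define H where "H = simple_zero_quotient G D"
  have S: "open (- {0 :: complex})" by (simp add: open_Compl)
  have hG: "G holomorphic_on - {0}" using G by (simp add: even_theta_def)
  have hD: "D holomorphic_on - {0}"
    unfolding D_def by (rule holomorphic_mtheta_pair[OF p(2) y(1)])
  have zeros: "G w = 0 \<and> deriv D w \<noteq> 0" if "w \<in> - {0}" "D w = 0" for w
    using even_theta_zero_at_mtheta_pair_zero[OF p G y(1,3)] mtheta_pair_zero_simple[OF p y(1,2)] that
    by (simp add: D_def)
  have GHD: "G w = H w * D w" if "w \<noteq> 0" for w
    using zeros[of w] that by (auto simp: H_def simple_zero_quotient_def)
  then show "G w = H w * (mtheta (y * w) p * mtheta (y / w) p)" if "w \<noteq> 0" for w
    using that by (simp add: D_def)
  have hH: "H holomorphic_on - {0}"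
    unfolding H_def by (rule holomorphic_simple_zero_quotient[OF S hG hD zeros])
  have iso: "eventually (\<lambda>v. v \<in> - {0} \<and> D v \<noteq> 0) (at w)" if "w \<in> - {0}" for w
    by (rule eventually_nonzero_simple_zeros[OF S hD that]) (use zeros in blast)
  have Hc: "isCont H w" if "w \<noteq> 0" for w
    by (rule holomorphic_on_imp_isCont[OF hH S]) (use that in simp)
  have "H (1 / w) = H w" if w: "w \<noteq> 0" for w
  proof (rule eq_if_isCont_eventually_eq[where f = "\<lambda>v. H (1 / v)"])
    show "isCont (\<lambda>v. H (1 / v)) w"
      by (rule continuous_at_compose[unfolded o_def, OF _ Hc]) (use w in \<open>auto intro!: continuous_intros\<close>)
    have "H (1 / v) = H v" if v: "v \<noteq> 0" "D v \<noteq> 0" for v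
    proof -
      have "D (1 / v) = D v" by (simp add: D_def mult.commute)
      then have "H (1 / v) * D v = H v * D v"
        using GHD[of v] GHD[of "1 / v"] G v by (simp add: even_theta_def)
      then show ?thesis using v(2) by simp
    qed
    then show "eventually (\<lambda>v. H (1 / v) = H v) (at w)"
      using iso[of w] w by (auto elim: eventually_mono)
  qed (use Hc w in auto)
  moreover have "H (p * w) = inverse (p ^ n) * inverse (w ^ (2 * n)) * H w" if w: "w \<noteq> 0" for w
  proof (rule eq_if_isCont_eventually_eq[where f = "\<lambda>v. H (p * v)"])
    show "isCont (\<lambda>v. H (p * v)) w"
      by (rule continuous_at_compose[unfolded o_def, OF _ Hc]) (use w p in \<open>auto intro!: continuous_intros\<close>)
    show "isCont (\<lambda>v. inverse (p ^ n) * inverse (v ^ (2 * n)) * H v) w"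
      using w Hc[OF w] by (auto intro!: continuous_intros)
    have "H (p * v) = inverse (p ^ n) * inverse (v ^ (2 * n)) * H v" if v: "v \<noteq> 0" "D v \<noteq> 0" for v
    proof -
      have "G (p * v) = inverse (p ^ Suc n) * inverse (v ^ (2 * Suc n)) * G v"
        using G v by (simp add: even_theta_def)
      moreover have "D (p * v) = inverse p * inverse (v ^ 2) * D v"
        using mtheta_pair_mult_self[OF p y(1) v(1)] by (simp add: D_def)
      ultimately have "H (p * v) * (inverse p * inverse (v ^ 2) * D v)
          = inverse (p ^ Suc n) * inverse (v ^ (2 * Suc n)) * (H v * D v)"
        using GHD[of v] GHD[of "p * v"] v p by simp
      then show ?thesis using v p by (simp add: field_simps power2_eq_square)
    qed
    then show "eventually (\<lambda>v. H (p * v) = inverse (p ^ n) * inverse (v ^ (2 * n)) * H v) (at w)"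
      using iso[of w] w by (auto elim: eventually_mono)
  qed
  ultimately show "even_theta p n H" using hH by (simp add: even_theta_def)
qed

text \<open>Induction on \<open>n\<close>: divide by the theta pair vanishing at the last point; in degree \<open>0\<close> the
  function is constant by \<open>holomorphic_periodic_constant\<close>.\<close>
lemma even_theta_eq_0_if_vanishes:
  assumes p: "p \<noteq> 0" "norm p < 1" and G: "even_theta p n G"
    and ys: "\<And>j. j \<le> n \<Longrightarrow> ys j \<noteq> 0 \<and> mtheta ((ys j) ^ 2) p \<noteq> 0 \<and> G (ys j) = 0"
    and general: "\<And>i j. i \<le> n \<Longrightarrow> j \<le> n \<Longrightarrow> i \<noteq> j \<Longrightarrow>
                    mtheta (ys i * ys j) p \<noteq> 0 \<and> mtheta (ys i / ys j) p \<noteq> 0"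
    and w: "w \<noteq> 0"
  shows "G w = 0"
  using G ys general w
proof (induction n arbitrary: G w)
  case 0
  have "G holomorphic_on - {0}" "\<And>v. v \<noteq> 0 \<Longrightarrow> G (p * v) = G v"
    using "0.prems"(1) by (simp_all add: even_theta_def)
  then have "G w = G (ys 0)"
    by (rule holomorphic_periodic_constant[OF p]) (use "0.prems"(2)[of 0] "0.prems"(4) in auto)
  then show ?case using "0.prems"(2)[of 0] by simp
next
  case (Suc n)
  define y where "y = ys (Suc n)"
  obtain H where H: "even_theta p n H" "\<And>v. v \<noteq> 0 \<Longrightarrow> G v = H v * (mtheta (y * v) p * mtheta (y / v) p)"
    using even_theta_divide[OF p Suc.prems(1)] Suc.prems(2)[of "Suc n"] unfolding y_def by blast
  have "ys j \<noteq> 0 \<and> mtheta ((ys j) ^ 2) p \<noteq> 0 \<and> H (ys j) = 0" if j: "j \<le> n" for j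
  proof -
    have "ys j \<noteq> 0 \<and> mtheta ((ys j) ^ 2) p \<noteq> 0 \<and> G (ys j) = 0"
      using Suc.prems(2) j by simp
    moreover have "mtheta (y * ys j) p \<noteq> 0 \<and> mtheta (y / ys j) p \<noteq> 0"
      using Suc.prems(3)[of "Suc n" j] j by (simp add: y_def)
    ultimately show ?thesis using H(2)[of "ys j"] by simp
  qed
  then have "H w = 0"
    by (rule Suc.IH[OF H(1) _ Suc.prems(3) Suc.prems(4)]) simp_all
  then show ?case using H(2)[OF Suc.prems(4)] by simp
qed

section \<open>Interpolation at the nodes \<open>a q\<^sup>k\<close>\<close>

text \<open>The Lagrange-type basis: the factor \<open>(aw, a/w;q,p)\<^sub>k\<close> vanishes at the nodes \<open>a q\<^sup>j\<close> with
  \<open>j < k\<close>, the factor \<open>(a q\<^sup>k\<^sup>+\<^sup>1 w, a q\<^sup>k\<^sup>+\<^sup>1/w;q,p)\<^sub>n\<^sub>-\<^sub>k\<close> at those with \<open>k < j \<le> n\<close>.\<close>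
definition node_basis :: "complex \<Rightarrow> complex \<Rightarrow> complex \<Rightarrow> nat \<Rightarrow> nat \<Rightarrow> complex \<Rightarrow> complex" where
  "node_basis a q p n k w = tpoch (a * w) q p k * tpoch (a / w) q p k
     * (tpoch (a * q ^ (k + 1) * w) q p (n - k) * tpoch (a * q ^ (k + 1) / w) q p (n - k))"

lemma node_basis_at_other_node:
  assumes jk: "j \<noteq> k" "j \<le> n" "k \<le> n" and q: "q \<noteq> 0" and a: "a \<noteq> 0" and p: "norm p < 1"
  shows "node_basis a q p n k (a * q ^ j) = 0"
proof (cases "j < k")
  case True
  have "mtheta (a / (a * q ^ j) * q ^ j) p = 0" using a q mtheta_one[OF p] by simp
  then have "tpoch (a / (a * q ^ j)) q p k = 0" by (rule tpoch_eq_0_if_mtheta_eq_0[OF True])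
  then show ?thesis by (simp add: node_basis_def)
next
  case False
  then have jk2: "j - Suc k < n - k" using jk by auto
  have e: "a * q ^ (k + 1) / (a * q ^ j) * q ^ (j - Suc k) = 1"
  proof -
    have jj: "j = (k + 1) + (j - Suc k)" using False jk by simp
    have "q ^ j = q ^ (k + 1) * q ^ (j - Suc k)" by (subst jj) (rule power_add)
    then show ?thesis using a q by (simp add: field_simps)
  qed
  have "mtheta (a * q ^ (k + 1) / (a * q ^ j) * q ^ (j - Suc k)) p = 0" unfolding e by (rule mtheta_one[OF p])
  then have "tpoch (a * q ^ (k + 1) / (a * q ^ j)) q p (n - k) = 0" by (rule tpoch_eq_0_if_mtheta_eq_0[OF jk2])
  then show ?thesis by (simp add: node_basis_def)
qed

lemma even_theta_node_basis:
  assumes p: "p \<noteq> 0" "norm p < 1" and a: "a \<noteq> 0" and q: "q \<noteq> 0" and k: "k \<le> n"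
  shows "even_theta p n (node_basis a q p n k)"
proof -
  have "even_theta p (k + (n - k)) (\<lambda>w. (tpoch (a * w) q p k * tpoch (a / w) q p k)
     * (tpoch (a * q ^ (k + 1) * w) q p (n - k) * tpoch (a * q ^ (k + 1) / w) q p (n - k)))"
    by (rule even_theta_mult[OF even_theta_tpoch_pair[OF p a q] even_theta_tpoch_pair[OF p _ q]]) (use a q in simp)
  then show ?thesis using k unfolding node_basis_def[abs_def] by simp
qed

text \<open>The coefficients of the expansion of \<open>F = f (cz, c/z;q,p)\<^sub>n\<close>, with the factors depending
  on \<open>z\<close> removed.\<close>
definition interp_scale :: "complex \<Rightarrow> complex \<Rightarrow> complex \<Rightarrow> complex \<Rightarrow> nat \<Rightarrow> complex" where
  "interp_scale a q p c n = tpoch (a ^ 2 * q) q p n * tpoch q q p n / (tpoch (a * c) q p n * tpoch (c / a) q p n)"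

definition interp_weight :: "complex \<Rightarrow> complex \<Rightarrow> complex \<Rightarrow> complex \<Rightarrow> nat \<Rightarrow> nat \<Rightarrow> complex" where
  "interp_weight a q p c n k = q ^ k * (mtheta (a ^ 2 * q ^ (2 * k)) p / mtheta (a ^ 2) p)
     * (tpoch (inverse (q ^ n)) q p k * tpoch (a ^ 2) q p k * tpoch (a * q / c) q p k * tpoch (a * c * q ^ n) q p k)
     / (tpoch q q p k * tpoch (a ^ 2 * q ^ (n + 1)) q p k * tpoch (a * c) q p k * tpoch (a * q powi (1 - int n) / c) q p k)
     / (tpoch (c * (a * q ^ k)) q p n * tpoch (c / (a * q ^ k)) q p n)"

lemma tpoch_node_square_factors:
  assumes j: "j \<le> n"
  shows "mtheta (a ^ 2 * q ^ (2 * j)) p * tpoch (a ^ 2) q p j * tpoch (a * (a * q ^ j)) q p j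
        * tpoch (a * q ^ (j + 1) * (a * q ^ j)) q p (n - j)
       = mtheta (a ^ 2) p * tpoch (a ^ 2 * q) q p n * tpoch (a ^ 2 * q ^ (n + 1)) q p j"
proof -
  have e1: "tpoch (a ^ 2) q p (j + j) = tpoch (a ^ 2) q p j * tpoch (a * (a * q ^ j)) q p j"
    using tpoch_add[of "a^2" q p j j] by (simp add: power2_eq_square mult_ac)
  have e2: "tpoch (a ^ 2) q p (Suc (j + j)) = tpoch (a ^ 2) q p (j + j) * mtheta (a ^ 2 * q ^ (2 * j)) p"
    by (simp add: tpoch_def mult_2)
  have e3: "tpoch (a ^ 2) q p (Suc (j + j) + (n - j)) = tpoch (a ^ 2) q p (Suc (j + j)) * tpoch (a * q ^ (j + 1) * (a * q ^ j)) q p (n - j)"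
    using tpoch_add[of "a^2" q p "Suc (j + j)" "n - j"] by (simp add: power2_eq_square power_add mult_ac)
  have e4: "tpoch (a ^ 2) q p (Suc n + j) = tpoch (a ^ 2) q p (Suc n) * tpoch (a ^ 2 * q ^ (n + 1)) q p j"
    using tpoch_add[of "a^2" q p "Suc n" j] by simp
  have e5: "tpoch (a ^ 2) q p (Suc n) = mtheta (a ^ 2) p * tpoch (a ^ 2 * q) q p n"
    using tpoch_add[of "a^2" q p 1 n] by (simp add: tpoch_def)
  have ee: "Suc (j + j) + (n - j) = Suc n + j" using j by simp
  have "mtheta (a ^ 2 * q ^ (2 * j)) p * tpoch (a ^ 2) q p j * tpoch (a * (a * q ^ j)) q p j
        * tpoch (a * q ^ (j + 1) * (a * q ^ j)) q p (n - j)
      = tpoch (a ^ 2) q p (Suc (j + j)) * tpoch (a * q ^ (j + 1) * (a * q ^ j)) q p (n - j)"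
    unfolding e2 e1 by (simp only: mult_ac)
  also have "\<dots> = tpoch (a ^ 2) q p (Suc n + j)" unfolding e3[symmetric] ee ..
  also have "\<dots> = mtheta (a ^ 2) p * tpoch (a ^ 2 * q) q p n * tpoch (a ^ 2 * q ^ (n + 1)) q p j"
    unfolding e4 e5 ..
  finally show ?thesis .
qed

lemma tpoch_node_q_factors:
  assumes j: "j \<le> n" and q: "q \<noteq> 0" and p: "p \<noteq> 0" "norm p < 1" and a: "a \<noteq> 0"
  shows "tpoch (inverse (q ^ n)) q p j * tpoch (a / (a * q ^ j)) q p j * tpoch (a * q ^ (j + 1) / (a * q ^ j)) q p (n - j)
       = ((\<Prod>i<j. - (inverse (q ^ n) * q ^ i)) * (\<Prod>i<j. - (inverse (q ^ j) * q ^ i)))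
         * tpoch q q p n * tpoch q q p j"
proof -
  have r1: "tpoch (inverse (q ^ n)) q p j = (\<Prod>i<j. - (inverse (q ^ n) * q ^ i)) * tpoch (q * q ^ (n - j)) q p j"
  proof (rule tpoch_reflect[OF q _ _ p])
    show "q * q ^ (n - j) \<noteq> 0" using q by simp
    have "q ^ n = q ^ (n - j) * q ^ j" using j by (simp add: power_add[symmetric])
    then show "inverse (q ^ n) * (q * q ^ (n - j)) * q ^ j = q" using q by (simp add: field_simps)
  qed
  have e: "a / (a * q ^ j) = inverse (q ^ j)" using a by (simp add: field_simps)
  have r2: "tpoch (inverse (q ^ j)) q p j = (\<Prod>i<j. - (inverse (q ^ j) * q ^ i)) * tpoch q q p j"
    by (rule tpoch_reflect[OF q q _ p]) (use q in simp)
  have e2: "a * q ^ (j + 1) / (a * q ^ j) = q" using a q by (simp add: field_simps)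
  have s: "tpoch q q p n = tpoch q q p (n - j) * tpoch (q * q ^ (n - j)) q p j"
    using tpoch_add[of q q p "n - j" j] j by simp
  show ?thesis unfolding e e2 r1 r2 s by (simp add: mult_ac)
qed

lemma tpoch_node_ac_factors: "tpoch (a * c) q p n * tpoch (a * c * q ^ n) q p j = tpoch (a * c) q p j * tpoch (c * (a * q ^ j)) q p n"
  using tpoch_add[of "a*c" q p n j] tpoch_add[of "a*c" q p j n] by (simp add: mult_ac add.commute)

lemma tpoch_node_c_factors:
  assumes j: "j \<le> n" and q: "q \<noteq> 0" and p: "p \<noteq> 0" "norm p < 1" and a: "a \<noteq> 0" and c: "c \<noteq> 0"
  shows "tpoch (a * q powi (1 - int n) / c) q p j * tpoch (c / (a * q ^ j)) q p n
       = ((\<Prod>i<j. - (a * q powi (1 - int n) / c * q ^ i)) * (\<Prod>i<j. - (c / (a * q ^ j) * q ^ i)))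
         * tpoch (c / a) q p n * tpoch (a * q / c) q p j"
proof -
  have qi: "q powi (1 - int n) = q / q ^ n" using q power_int_diff[of q 1 "int n"] by simp
  have r1: "tpoch (a * q powi (1 - int n) / c) q p j = (\<Prod>i<j. - (a * q powi (1 - int n) / c * q ^ i)) * tpoch (c / a * q ^ (n - j)) q p j"
  proof (rule tpoch_reflect[OF q _ _ p])
    show "c / a * q ^ (n - j) \<noteq> 0" using q a c by simp
    have "q ^ n = q ^ (n - j) * q ^ j" using j by (simp add: power_add[symmetric])
    then show "a * q powi (1 - int n) / c * (c / a * q ^ (n - j)) * q ^ j = q"
      unfolding qi using q a c by (simp add: field_simps)
  qed
  have s1: "tpoch (c / a) q p n = tpoch (c / a) q p (n - j) * tpoch (c / a * q ^ (n - j)) q p j"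
    using tpoch_add[of "c/a" q p "n - j" j] j by simp
  have s2: "tpoch (c / (a * q ^ j)) q p n = tpoch (c / (a * q ^ j)) q p j * tpoch (c / a) q p (n - j)"
    using tpoch_add[of "c / (a * q ^ j)" q p j "n - j"] j q by simp
  have r2: "tpoch (c / (a * q ^ j)) q p j = (\<Prod>i<j. - (c / (a * q ^ j) * q ^ i)) * tpoch (a * q / c) q p j"
    by (rule tpoch_reflect[OF q _ _ p]) (use q a c in \<open>auto simp: field_simps\<close>)
  show ?thesis unfolding r1 s1 s2 r2 by (simp add: mult_ac)
qed

lemma node_sign_factors:
  fixes q a c :: complex
  assumes q: "q \<noteq> 0" and a: "a \<noteq> 0" and c: "c \<noteq> 0"
  shows "q ^ j * ((\<Prod>i<j. - (inverse (q ^ n) * q ^ i)) * (\<Prod>i<j. - (inverse (q ^ j) * q ^ i)))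
       = (\<Prod>i<j. - (a * q powi (1 - int n) / c * q ^ i)) * (\<Prod>i<j. - (c / (a * q ^ j) * q ^ i))"
proof -
  define Q where "Q = (\<Prod>i<j. q ^ i)"
  define y1 where "y1 = inverse (q ^ n)"
  define y2 where "y2 = inverse (q ^ j)"
  define y3 where "y3 = a * q powi (1 - int n) / c"
  define y4 where "y4 = c / (a * q ^ j)"
  have qi: "q powi (1 - int n) = q / q ^ n" using q power_int_diff[of q 1 "int n"] by simp
  have base: "q * ((- y1) * (- y2)) = (- y3) * (- y4)"
    unfolding y1_def y2_def y3_def y4_def qi using q a c by (simp add: field_simps)
  have L: "q ^ j * ((- y1) ^ j * Q * ((- y2) ^ j * Q)) = (q * ((- y1) * (- y2))) ^ j * (Q * Q)"
    by (simp only: power_mult_distrib mult_ac)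
  have R: "(- y3) ^ j * Q * ((- y4) ^ j * Q) = ((- y3) * (- y4)) ^ j * (Q * Q)"
    by (simp only: power_mult_distrib mult_ac)
  show ?thesis unfolding prod_minus_mult_power Q_def[symmetric] y1_def[symmetric] y2_def[symmetric]
      y3_def[symmetric] y4_def[symmetric] L R base ..
qed

text \<open>The variables stand for the factors in \<open>interp_scale_eq_weight_basis\<close>, e.g.
  \<open>ACn = (ac;q,p)\<^sub>n\<close> and \<open>A2j = (a\<^sup>2;q,p)\<^sub>j\<close>; the hypotheses are the five identities above.\<close>
lemma node_weight_algebra:
  fixes Aq Qn ACn CAn qj t th0 Nm1 A2 AQC ACQn Qj A2n1 ACj AQ1n CAQj CdAQj A2j Nmj A2r Qr P12 P34 :: complex
  assumes square: "t * A2 * A2j * A2r = th0 * Aq * A2n1"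
    and q_factors: "Nm1 * Nmj * Qr = P12 * Qn * Qj"
    and ac: "ACn * ACQn = ACj * CAQj"
    and c_factors: "AQ1n * CdAQj = P34 * CAn * AQC"
    and sign: "qj * P12 = P34"
    and nz: "th0 \<noteq> 0" "Qj \<noteq> 0" "A2n1 \<noteq> 0" "ACj \<noteq> 0" "AQ1n \<noteq> 0" "CAQj \<noteq> 0" "CdAQj \<noteq> 0"
      "ACn \<noteq> 0" "CAn \<noteq> 0"
  shows "Aq * Qn / (ACn * CAn) = qj * (t / th0) * (Nm1 * A2 * AQC * ACQn) / (Qj * A2n1 * ACj * AQ1n) / (CAQj * CdAQj) * (A2j * Nmj * A2r * Qr)"
proof -
  have P34: "P34 \<noteq> 0" and AQC: "AQC \<noteq> 0" using c_factors nz by auto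
  have "qj * (t / th0) * (Nm1 * A2 * AQC * ACQn) / (Qj * A2n1 * ACj * AQ1n) / (CAQj * CdAQj) * (A2j * Nmj * A2r * Qr)
      = (qj * (t * A2 * A2j * A2r) * (Nm1 * Nmj * Qr) * AQC * ACQn) / (th0 * Qj * A2n1 * ACj * (AQ1n * CdAQj) * CAQj)"
    using nz by (simp add: field_simps)
  also have "\<dots> = (qj * (th0 * Aq * A2n1) * (P12 * Qn * Qj) * AQC * ACQn) / (th0 * Qj * A2n1 * ACj * (P34 * CAn * AQC) * CAQj)"
    unfolding square q_factors c_factors ..
  also have "\<dots> = ((qj * P12) * Aq * Qn * ACQn) / (ACj * P34 * CAn * CAQj)"
    using nz AQC by (simp add: field_simps)
  also have "\<dots> = (Aq * Qn * ACQn) / (ACj * CAn * CAQj)"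
    unfolding sign using P34 by (simp add: field_simps)
  also have "\<dots> = (Aq * Qn * (ACn * ACQn)) / (ACn * ACj * CAn * CAQj)"
    using nz by (simp add: field_simps)
  also have "\<dots> = Aq * Qn / (ACn * CAn)"
    unfolding ac using nz by (simp add: field_simps)
  finally show ?thesis by simp
qed

lemma interp_scale_eq_weight_basis:
  assumes j: "j \<le> n" and q: "q \<noteq> 0" and p: "p \<noteq> 0" "norm p < 1" and a: "a \<noteq> 0" and c: "c \<noteq> 0"
    and nz: "mtheta (a ^ 2) p \<noteq> 0" "tpoch q q p j \<noteq> 0" "tpoch (a ^ 2 * q ^ (n + 1)) q p j \<noteq> 0"
      "tpoch (a * c) q p j \<noteq> 0" "tpoch (a * q powi (1 - int n) / c) q p j \<noteq> 0"
      "tpoch (c * (a * q ^ j)) q p n \<noteq> 0" "tpoch (c / (a * q ^ j)) q p n \<noteq> 0"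
      "tpoch (a * c) q p n \<noteq> 0" "tpoch (c / a) q p n \<noteq> 0"
  shows "interp_scale a q p c n = interp_weight a q p c n j * node_basis a q p n j (a * q ^ j)"
proof -
  have "interp_scale a q p c n = interp_weight a q p c n j * (tpoch (a * (a * q ^ j)) q p j * tpoch (a / (a * q ^ j)) q p j
     * tpoch (a * q ^ (j + 1) * (a * q ^ j)) q p (n - j) * tpoch (a * q ^ (j + 1) / (a * q ^ j)) q p (n - j))"
    unfolding interp_scale_def interp_weight_def
    by (rule node_weight_algebra[OF tpoch_node_square_factors[OF j] tpoch_node_q_factors[OF j q p a]
          tpoch_node_ac_factors tpoch_node_c_factors[OF j q p a c] node_sign_factors[OF q a c] nz])
  then show ?thesis unfolding node_basis_def by (simp only: mult_ac)
qed

lemma nodes_general_position: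
  assumes q: "q \<noteq> 0" and p: "p \<noteq> 0" "norm p < 1" and a: "a \<noteq> 0"
    and gen: "\<And>s. s \<le> 2 * n \<Longrightarrow> mtheta (a ^ 2 * q ^ s) p \<noteq> 0"
    and Qn: "tpoch q q p n \<noteq> 0" and ij: "i \<le> n" "j \<le> n" "i \<noteq> j"
  shows "mtheta (a * q ^ i * (a * q ^ j)) p \<noteq> 0 \<and> mtheta (a * q ^ i / (a * q ^ j)) p \<noteq> 0"
proof
  have "a * q ^ i * (a * q ^ j) = a ^ 2 * q ^ (i + j)"
    by (simp add: power2_eq_square power_add mult_ac)
  then show "mtheta (a * q ^ i * (a * q ^ j)) p \<noteq> 0" using gen[of "i + j"] ij by simp
  have quotient: "mtheta (a * q ^ i / (a * q ^ j)) p \<noteq> 0" if ij: "j < i" "i \<le> n" for i j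
  proof -
    have "i = j + (1 + (i - j - 1))" using ij by simp
    then have "q ^ i = q ^ j * (q * q ^ (i - j - 1))" by (metis power_add power_one_right)
    then have "a * q ^ i / (a * q ^ j) = q * q ^ (i - j - 1)" using a q by (simp add: field_simps)
    then show ?thesis using mtheta_nonzero_if_tpoch_nonzero[OF Qn, of "i - j - 1"] ij by simp
  qed
  show "mtheta (a * q ^ i / (a * q ^ j)) p \<noteq> 0"
  proof (cases "j < i")
    case True
    then show ?thesis using quotient ij by blast
  next
    case False
    then have "mtheta (a * q ^ j / (a * q ^ i)) p \<noteq> 0" using quotient ij by simp
    moreover have "a * q ^ i / (a * q ^ j) = 1 / (a * q ^ j / (a * q ^ i))" by simp
    ultimately show ?thesis using mtheta_divide[of "a * q ^ j / (a * q ^ i)" p] a q p by simp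
  qed
qed

text \<open>Both sides are even theta functions of degree \<open>n\<close> that agree at the nodes \<open>a q\<^sup>j\<close>, where
  only the \<open>j\<close>-th basis function survives.\<close>
lemma even_theta_interpolation:
  assumes q: "q \<noteq> 0" and p: "p \<noteq> 0" "norm p < 1" and a: "a \<noteq> 0" and c: "c \<noteq> 0"
    and F: "even_theta p n F" and w: "w \<noteq> 0"
    and gen: "\<And>s. s \<le> 2 * n \<Longrightarrow> mtheta (a ^ 2 * q ^ s) p \<noteq> 0"
    and nz_n: "tpoch (a * c) q p n \<noteq> 0" "tpoch (c / a) q p n \<noteq> 0"
    and nz_k: "\<And>k. k \<le> n \<Longrightarrow> tpoch q q p k \<noteq> 0 \<and> tpoch (a ^ 2 * q ^ (n + 1)) q p k \<noteq> 0
        \<and> tpoch (a * c) q p k \<noteq> 0 \<and> tpoch (a * q powi (1 - int n) / c) q p k \<noteq> 0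
        \<and> tpoch (c * (a * q ^ k)) q p n \<noteq> 0 \<and> tpoch (c / (a * q ^ k)) q p n \<noteq> 0"
  shows "interp_scale a q p c n * F w
       = (\<Sum>k\<le>n. interp_weight a q p c n k * F (a * q ^ k) * node_basis a q p n k w)"
proof -
  define G where "G = (\<lambda>w. interp_scale a q p c n * F w
      - (\<Sum>k\<le>n. interp_weight a q p c n k * F (a * q ^ k) * node_basis a q p n k w))"
  have G: "even_theta p n G"
    unfolding G_def
    by (intro even_theta_diff even_theta_scale F even_theta_sum finite_atMost
        even_theta_scale[where G = "node_basis a q p n _"] even_theta_node_basis p a q) simp
  have nodes: "G (a * q ^ j) = 0" if j: "j \<le> n" for j
  proof -
    have "(\<Sum>k\<in>{..n}-{j}. interp_weight a q p c n k * F (a * q ^ k) * node_basis a q p n k (a * q ^ j)) = 0"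
      using node_basis_at_other_node[OF _ j _ q a p(2)] by (intro sum.neutral) auto
    then have "(\<Sum>k\<le>n. interp_weight a q p c n k * F (a * q ^ k) * node_basis a q p n k (a * q ^ j))
        = interp_weight a q p c n j * F (a * q ^ j) * node_basis a q p n j (a * q ^ j)"
      using j by (simp add: sum.remove[of "{..n}" j])
    moreover have "interp_scale a q p c n
        = interp_weight a q p c n j * node_basis a q p n j (a * q ^ j)"
      using nz_k[OF j] gen[of 0]
      by (intro interp_scale_eq_weight_basis[OF j q p a c] nz_n) auto
    ultimately show ?thesis by (simp add: G_def algebra_simps)
  qed
  have "G w = 0"
  proof (rule even_theta_eq_0_if_vanishes[OF p G _ _ w, where ys = "\<lambda>j. a * q ^ j"])
    fix j assume j: "j \<le> n"
    have "(a * q ^ j) ^ 2 = a ^ 2 * q ^ (2 * j)" by (simp add: power_mult_distrib power_mult mult.commute)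
    then show "a * q ^ j \<noteq> 0 \<and> mtheta ((a * q ^ j) ^ 2) p \<noteq> 0 \<and> G (a * q ^ j) = 0"
      using a q gen[of "2 * j"] j nodes by simp
  qed (use nodes_general_position[OF q p a gen] nz_k[of n] in auto)
  then show ?thesis by (simp add: G_def)
qed

section \<open>The expansion of \<open>W\<^sub>c\<^sup>n\<close>\<close>

definition expansion_scale :: "complex \<Rightarrow> complex \<Rightarrow> complex \<Rightarrow> complex \<Rightarrow> complex \<Rightarrow> nat \<Rightarrow> complex" where
  "expansion_scale a c z q p n =
     tpoch (a ^ 2 * q) q p n * tpoch q q p n * tpoch (c * z) q p n * tpoch (c / z) q p n
     / (tpoch (a * c) q p n * tpoch (c / a) q p n * tpoch (a * q * z) q p n * tpoch (a * q / z) q p n)"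

definition expansion_coeff ::
    "complex \<Rightarrow> complex \<Rightarrow> complex \<Rightarrow> complex \<Rightarrow> complex \<Rightarrow> nat \<Rightarrow> nat \<Rightarrow> complex" where
  "expansion_coeff a c z q p n k = q ^ k * (mtheta (a ^ 2 * q ^ (2 * k)) p / mtheta (a ^ 2) p)
     * (tpoch (inverse (q ^ n)) q p k * tpoch (a ^ 2) q p k * tpoch (a * q / c) q p k
        * tpoch (a * c * q ^ n) q p k * tpoch (a * z) q p k * tpoch (a / z) q p k)
     / (tpoch q q p k * tpoch (a ^ 2 * q ^ (n + 1)) q p k * tpoch (a * c) q p k
        * tpoch (a * q powi (1 - int n) / c) q p k * tpoch (a * q * z) q p k * tpoch (a * q / z) q p k)"

lemma generator_eq_quotient:
  assumes m: "m \<le> n"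
    and P: "tpoch (c * w) q p n * tpoch (c / w) q p n \<noteq> 0"
  shows "g w / (tpoch (c * w) q p m * tpoch (c / w) q p m)
       = g w * (tpoch (c * q ^ m * w) q p (n - m) * tpoch (c * q ^ m / w) q p (n - m))
         / (tpoch (c * w) q p n * tpoch (c / w) q p n)"
proof -
  have s1: "tpoch (c * w) q p n = tpoch (c * w) q p m * tpoch (c * q ^ m * w) q p (n - m)"
    using tpoch_add[of "c * w" q p m "n - m"] m by (simp add: mult_ac)
  have s2: "tpoch (c / w) q p n = tpoch (c / w) q p m * tpoch (c * q ^ m / w) q p (n - m)"
    using tpoch_add[of "c / w" q p m "n - m"] m by (simp add: mult_ac)
  show ?thesis using P unfolding s1 s2 by (simp add: field_simps)
qed

lemma expansion_term_identity:
  fixes qk t t0 N Az Adz M Aqz Aqdz Fk Pk Bz Bdz :: complex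
  assumes "Bz \<noteq> 0" "Bdz \<noteq> 0"
  shows "qk * (t / t0) * (N * Az * Adz) / (M * Aqz * Aqdz) * (Fk / Pk)
       = (qk * (t / t0) * N / M / Pk) * Fk * (Az * Adz * (Bz * Bdz)) / ((Aqz * Bz) * (Aqdz * Bdz))"
  using assms by (simp add: field_simps)

lemma generator_expansion_generic:
  fixes q p a c z :: complex and n m :: nat and g :: "complex \<Rightarrow> complex"
  assumes q: "q \<noteq> 0" and p: "p \<noteq> 0" "norm p < 1"
    and a: "a \<noteq> 0" and c: "c \<noteq> 0" and z: "z \<noteq> 0" and m: "m \<le> n" and g: "even_theta p m g"
    and nz1: "tpoch (a * c) q p n * tpoch (c / a) q p n
              * tpoch (a * q * z) q p n * tpoch (a * q / z) q p n \<noteq> 0"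
    and nz2: "mtheta (a ^ 2) p \<noteq> 0"
    and nz3: "\<And>k. k \<le> n \<Longrightarrow>
              tpoch q q p k * tpoch (a ^ 2 * q ^ (n + 1)) q p k * tpoch (a * c) q p k
              * tpoch (a * q powi (1 - int n) / c) q p k
              * tpoch (a * q * z) q p k * tpoch (a * q / z) q p k \<noteq> 0"
    and nz4: "tpoch (c * z) q p n * tpoch (c / z) q p n \<noteq> 0"
    and nz5: "\<And>k. k \<le> n \<Longrightarrow>
              tpoch (c * (a * q ^ k)) q p n * tpoch (c / (a * q ^ k)) q p n \<noteq> 0"
    and gen: "\<And>s. s \<le> 2 * n \<Longrightarrow> mtheta (a ^ 2 * q ^ s) p \<noteq> 0"
    and f: "f = (\<lambda>z. g z / (tpoch (c * z) q p m * tpoch (c / z) q p m))"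
  shows "expansion_scale a c z q p n * f z = (\<Sum>k\<le>n. expansion_coeff a c z q p n k * f (a * q ^ k))"
proof -
  define F where "F = (\<lambda>w. g w * (tpoch (c * q ^ m * w) q p (n - m) * tpoch (c * q ^ m / w) q p (n - m)))"
  define P where "P = (\<lambda>w. tpoch (c * w) q p n * tpoch (c / w) q p n)"
  have fF: "f w = F w / P w" if "P w \<noteq> 0" for w
    unfolding f F_def P_def by (rule generator_eq_quotient[OF m that[unfolded P_def]])
  have "even_theta p (m + (n - m)) F"
    unfolding F_def by (rule even_theta_mult[OF g even_theta_tpoch_pair[OF p _ q]]) (use c q in simp)
  then have F: "even_theta p n F" using m by simp
  define D where "D = tpoch (a * q * z) q p n * tpoch (a * q / z) q p n"
  have D0: "D \<noteq> 0" using nz1 by (simp add: D_def)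
  have Pz: "P z \<noteq> 0" using nz4 by (simp add: P_def)
  have "interp_scale a q p c n * F z
       = (\<Sum>k\<le>n. interp_weight a q p c n k * F (a * q ^ k) * node_basis a q p n k z)"
    using nz1 nz3 nz5 by (intro even_theta_interpolation[OF q p a c F z gen]) auto
  moreover have "expansion_scale a c z q p n * f z = interp_scale a q p c n * F z / D"
    unfolding fF[OF Pz] using Pz D0
    unfolding expansion_scale_def interp_scale_def D_def P_def by (simp add: field_simps)
  moreover have "expansion_coeff a c z q p n k * f (a * q ^ k)
      = interp_weight a q p c n k * F (a * q ^ k) * node_basis a q p n k z / D" if k: "k \<le> n" for k
  proof -
    have Pk: "P (a * q ^ k) \<noteq> 0" using nz5[OF k] by (simp add: P_def)
    have s1: "tpoch (a * q * z) q p n = tpoch (a * q * z) q p k * tpoch (a * q ^ (k + 1) * z) q p (n - k)"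
      using tpoch_add[of "a * q * z" q p k "n - k"] k by (simp add: mult_ac)
    have s2: "tpoch (a * q / z) q p n = tpoch (a * q / z) q p k * tpoch (a * q ^ (k + 1) / z) q p (n - k)"
      using tpoch_add[of "a * q / z" q p k "n - k"] k by (simp add: mult_ac)
    have "tpoch (a * q ^ (k + 1) * z) q p (n - k) \<noteq> 0" "tpoch (a * q ^ (k + 1) / z) q p (n - k) \<noteq> 0"
      using nz1 unfolding s1 s2 by auto
    then show ?thesis
      unfolding fF[OF Pk] D_def s1 s2 node_basis_def interp_weight_def P_def expansion_coeff_def
      by (intro expansion_term_identity)
  qed
  ultimately show ?thesis by (simp add: sum_divide_distrib)
qed

lemma eq_if_isCont_islimpt:
  fixes L R :: "'a :: t2_space \<Rightarrow> 'b :: t2_space"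
  assumes "isCont L a" "isCont R a" "a islimpt S" "\<And>b. b \<in> S \<Longrightarrow> L b = R b"
  shows "L a = R a"
proof -
  have "at a within S \<noteq> bot" using assms(3) trivial_limit_within by blast
  moreover have "(L \<longlongrightarrow> L a) (at a within S)" "(R \<longlongrightarrow> R a) (at a within S)"
    using assms(1,2) isCont_def tendsto_within_subset by blast+
  moreover have "eventually (\<lambda>b. R b = L b) (at a within S)"
    using assms(4) by (auto simp: eventually_at_filter)
  ultimately show ?thesis
    using Lim_transform_eventually tendsto_unique by metis
qed

lemma islimpt_nonzero_minus_countable:
  fixes \<Phi> :: "complex \<Rightarrow> complex"
  assumes "isCont \<Phi> a" "\<Phi> a \<noteq> 0" "countable C"
  shows "a islimpt {b. \<Phi> b \<noteq> 0 \<and> b \<notin> C}"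
  unfolding islimpt_def
proof (intro allI impI)
  fix T :: "complex set" assume T: "a \<in> T" "open T"
  obtain e where e: "e > 0" "\<And>y. dist a y < e \<Longrightarrow> \<Phi> y \<noteq> 0"
    using continuous_at_avoid[OF assms(1,2)] by blast
  obtain e' where e': "e' > 0" "ball a e' \<subseteq> T" using T open_contains_ball by blast
  have "uncountable (ball a (min e e') - (C \<union> {a}))"
    using e e' assms(3) by (intro uncountable_minus_countable uncountable_ball) auto
  then obtain y where y: "y \<in> ball a (min e e') - (C \<union> {a})"
    using uncountable_infinite by (metis ex_in_conv finite.emptyI)
  then have "y \<in> T" using e'(2) by auto
  with y show "\<exists>y\<in>{b. \<Phi> b \<noteq> 0 \<and> b \<notin> C}. y \<in> T \<and> y \<noteq> a"
    using e(2)[of y] by auto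
qed

lemma finite_square_roots: "finite {a :: complex. a ^ 2 = w}"
proof -
  obtain x :: complex where x: "x ^ 2 = w"
    by (metis power2_csqrt)
  have "{a :: complex. a ^ 2 = w} \<subseteq> {x, - x}"
  proof
    fix a assume "a \<in> {a :: complex. a ^ 2 = w}"
    then have "(a - x) * (a + x) = 0" using x by (simp add: algebra_simps power2_eq_square)
    then show "a \<in> {x, - x}" by (auto simp: add_eq_0_iff)
  qed
  then show ?thesis by (rule finite_subset) simp
qed

lemma countable_mtheta_square_zeros:
  assumes p: "p \<noteq> 0" "norm p < 1" and q: "q \<noteq> 0"
  shows "countable {a. \<exists>s\<le>N. mtheta (a ^ 2 * q ^ s) p = 0}"
proof (rule countable_subset)
  show "{a. \<exists>s\<le>N. mtheta (a ^ 2 * q ^ s) p = 0}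
      \<subseteq> {0} \<union> (\<Union>s\<le>N. \<Union>m::int. {a. a ^ 2 = p powi m / q ^ s})"
  proof
    fix a assume "a \<in> {a. \<exists>s\<le>N. mtheta (a ^ 2 * q ^ s) p = 0}"
    then obtain s where s: "s \<le> N" "mtheta (a ^ 2 * q ^ s) p = 0" by auto
    show "a \<in> {0} \<union> (\<Union>s\<le>N. \<Union>m::int. {a. a ^ 2 = p powi m / q ^ s})"
    proof (cases "a = 0")
      case False
      then obtain m :: int where "a ^ 2 * q ^ s = p powi m"
        using mtheta_eq_0_iff[OF _ p] s q by (metis mult_eq_0_iff power_eq_0_iff power_not_zero)
      then have "a ^ 2 = p powi m / q ^ s" using q by (simp add: field_simps)
      then show ?thesis using s by blast
    qed blast
  qed
  show "countable ({0} \<union> (\<Union>s\<le>N. \<Union>m::int. {a :: complex. a ^ 2 = p powi m / q ^ s}))"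
    by (simp add: countable_finite finite_square_roots)
qed

lemma isCont_holomorphic_compose:
  assumes g: "g holomorphic_on (- {0})" and u: "isCont u a0" and u0: "u a0 \<noteq> 0"
  shows "isCont (\<lambda>a. g (u a)) a0"
  using continuous_at_compose[OF u holomorphic_on_imp_isCont[OF g open_Compl[OF closed_singleton]]] u0
  by (simp add: o_def)

lemma generator_expansion:
  fixes q p a c z :: complex and n m :: nat and g :: "complex \<Rightarrow> complex"
  assumes q: "q \<noteq> 0" and p: "p \<noteq> 0" "norm p < 1"
    and a: "a \<noteq> 0" and c: "c \<noteq> 0" and z: "z \<noteq> 0" and m: "m \<le> n" and g: "even_theta p m g"
    and nz1: "tpoch (a * c) q p n * tpoch (c / a) q p n
              * tpoch (a * q * z) q p n * tpoch (a * q / z) q p n \<noteq> 0"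
    and nz2: "mtheta (a ^ 2) p \<noteq> 0"
    and nz3: "\<And>k. k \<le> n \<Longrightarrow>
              tpoch q q p k * tpoch (a ^ 2 * q ^ (n + 1)) q p k * tpoch (a * c) q p k
              * tpoch (a * q powi (1 - int n) / c) q p k
              * tpoch (a * q * z) q p k * tpoch (a * q / z) q p k \<noteq> 0"
    and nz4: "tpoch (c * z) q p n * tpoch (c / z) q p n \<noteq> 0"
    and nz5: "\<And>k. k \<le> n \<Longrightarrow>
              tpoch (c * (a * q ^ k)) q p n * tpoch (c / (a * q ^ k)) q p n \<noteq> 0"
    and f: "f = (\<lambda>z. g z / (tpoch (c * z) q p m * tpoch (c / z) q p m))"
  shows "expansion_scale a c z q p n * f z = (\<Sum>k\<le>n. expansion_coeff a c z q p n k * f (a * q ^ k))"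
proof -
  define \<Phi> where "\<Phi> = (\<lambda>b. b * (tpoch (b * c) q p n * tpoch (c / b) q p n
      * tpoch (b * q * z) q p n * tpoch (b * q / z) q p n) * mtheta (b ^ 2) p
    * (\<Prod>k\<le>n. tpoch q q p k * tpoch (b ^ 2 * q ^ (n + 1)) q p k * tpoch (b * c) q p k
      * tpoch (b * q powi (1 - int n) / c) q p k * tpoch (b * q * z) q p k * tpoch (b * q / z) q p k)
    * (\<Prod>k\<le>n. tpoch (c * (b * q ^ k)) q p n * tpoch (c / (b * q ^ k)) q p n))"
  define C where "C = {b. \<exists>s\<le>2 * n. mtheta (b ^ 2 * q ^ s) p = 0}"
  have generic: "expansion_scale b c z q p n * f z = (\<Sum>k\<le>n. expansion_coeff b c z q p n k * f (b * q ^ k))"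
    if b: "b \<in> {b. \<Phi> b \<noteq> 0 \<and> b \<notin> C}" for b
  proof -
    have "b \<noteq> 0" "tpoch (b * c) q p n * tpoch (c / b) q p n
        * tpoch (b * q * z) q p n * tpoch (b * q / z) q p n \<noteq> 0" "mtheta (b ^ 2) p \<noteq> 0"
      "\<forall>k\<in>{..n}. tpoch q q p k * tpoch (b ^ 2 * q ^ (n + 1)) q p k * tpoch (b * c) q p k
        * tpoch (b * q powi (1 - int n) / c) q p k * tpoch (b * q * z) q p k * tpoch (b * q / z) q p k \<noteq> 0"
      "\<forall>k\<in>{..n}. tpoch (c * (b * q ^ k)) q p n * tpoch (c / (b * q ^ k)) q p n \<noteq> 0"
      using b unfolding \<Phi>_def by (auto simp: prod_zero_iff simp del: mult_eq_0_iff)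
    moreover have "mtheta (b ^ 2 * q ^ s) p \<noteq> 0" if "s \<le> 2 * n" for s
      using b that by (auto simp: C_def)
    ultimately show ?thesis
      by (intro generator_expansion_generic[OF q p _ c z m g _ _ _ nz4 _ _ f]) auto
  qed
  have limpt: "a islimpt {b. \<Phi> b \<noteq> 0 \<and> b \<notin> C}"
  proof (rule islimpt_nonzero_minus_countable)
    show "isCont \<Phi> a"
      unfolding \<Phi>_def by (intro continuous_intros p q) (use a c z q in auto)
    show "\<Phi> a \<noteq> 0"
      unfolding \<Phi>_def using a nz1 nz2 nz3 nz5 by (auto simp: prod_zero_iff simp del: mult_eq_0_iff)
    show "countable C"
      unfolding C_def by (rule countable_mtheta_square_zeros[OF p q])
  qed
  have nz_m: "tpoch (c * (a * q ^ k)) q p m * tpoch (c / (a * q ^ k)) q p m \<noteq> 0" if "k \<le> n" for k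
    using nz5[OF that] tpoch_nonzero_le[OF _ m] by auto
  have gh: "g holomorphic_on - {0}" using g by (simp add: even_theta_def)
  have contR: "isCont (\<lambda>b. \<Sum>k\<le>n. expansion_coeff b c z q p n k * f (b * q ^ k)) a"
    unfolding expansion_coeff_def f
    by (intro continuous_intros isCont_holomorphic_compose[OF gh] p q) (use a c z q nz2 nz3 nz_m in auto)
  moreover have "isCont (\<lambda>b. expansion_scale b c z q p n * f z) a"
    unfolding expansion_scale_def by (intro continuous_intros p q) (use a c z q nz1 in auto)
  ultimately show ?thesis using eq_if_isCont_islimpt[OF _ contR limpt generic] by blast
qed

lemma mem_Wgen_iff:
  "h \<in> Wgen q p c n \<longleftrightarrow>
     (\<exists>g m. m \<le> n \<and> even_theta p m g \<and> h = (\<lambda>z. g z / (tpoch (c * z) q p m * tpoch (c / z) q p m)))"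
  unfolding Wgen_def even_theta_def by (auto simp: eq_commute[of "g (1 / _)" for g])

lemma module_fscale: "module fscale"
  by unfold_locales (auto simp: fscale_def fun_eq_iff algebra_simps)

lemma span_fscale_pointwise_identity:
  fixes A :: complex and C :: "nat \<Rightarrow> complex"
  assumes f: "f \<in> module.span fscale B"
    and B: "\<And>h. h \<in> B \<Longrightarrow> A * h z = (\<Sum>k\<in>K. C k * h (w k))"
  shows "A * f z = (\<Sum>k\<in>K. C k * f (w k))"
proof -
  obtain t r where t: "t \<subseteq> B" and fe: "f = (\<Sum>h\<in>t. fscale (r h) h)"
    using f unfolding module.span_explicit[OF module_fscale] by blast
  have fx: "f x = (\<Sum>h\<in>t. r h * h x)" for x
    unfolding fe by (induction t rule: infinite_finite_induct) (auto simp: fscale_def)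
  have "A * f z = (\<Sum>h\<in>t. r h * (A * h z))"
    unfolding fx by (simp add: sum_distrib_left mult_ac)
  also have "\<dots> = (\<Sum>h\<in>t. r h * (\<Sum>k\<in>K. C k * h (w k)))"
    using t B by (intro sum.cong) auto
  also have "\<dots> = (\<Sum>k\<in>K. C k * f (w k))"
    unfolding fx by (simp add: sum_distrib_left sum.swap[of _ t] mult_ac)
  finally show ?thesis .
qed

theorem theorem2p6:
  fixes q p a c z :: complex and n :: nat and f :: "complex \<Rightarrow> complex"
  assumes q: "0 < norm q" "norm q < 1"
    and p: "0 < norm p" "norm p < 1"
    and a: "a \<noteq> 0" and c: "c \<noteq> 0" and z: "z \<noteq> 0"
    and fW: "f \<in> W q p c n"
    and nz1: "tpoch (a * c) q p n * tpoch (c / a) q p n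
              * tpoch (a * q * z) q p n * tpoch (a * q / z) q p n \<noteq> 0"
    and nz2: "mtheta (a ^ 2) p \<noteq> 0"
    and nz3: "\<And>k. k \<le> n \<Longrightarrow>
              tpoch q q p k * tpoch (a ^ 2 * q ^ (n + 1)) q p k * tpoch (a * c) q p k
              * tpoch (a * q powi (1 - int n) / c) q p k
              * tpoch (a * q * z) q p k * tpoch (a * q / z) q p k \<noteq> 0"
    and nz4: "tpoch (c * z) q p n * tpoch (c / z) q p n \<noteq> 0"
    and nz5: "\<And>k. k \<le> n \<Longrightarrow>
              tpoch (c * (a * q ^ k)) q p n * tpoch (c / (a * q ^ k)) q p n \<noteq> 0"
  shows "tpoch (a ^ 2 * q) q p n * tpoch q q p n * tpoch (c * z) q p n * tpoch (c / z) q p n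
         / (tpoch (a * c) q p n * tpoch (c / a) q p n
            * tpoch (a * q * z) q p n * tpoch (a * q / z) q p n) * f z
       = (\<Sum>k\<le>n. q ^ k * (mtheta (a ^ 2 * q ^ (2 * k)) p / mtheta (a ^ 2) p)
           * (tpoch (inverse (q ^ n)) q p k * tpoch (a ^ 2) q p k * tpoch (a * q / c) q p k
              * tpoch (a * c * q ^ n) q p k * tpoch (a * z) q p k * tpoch (a / z) q p k)
           / (tpoch q q p k * tpoch (a ^ 2 * q ^ (n + 1)) q p k * tpoch (a * c) q p k
              * tpoch (a * q powi (1 - int n) / c) q p k
              * tpoch (a * q * z) q p k * tpoch (a * q / z) q p k)
           * f (a * q ^ k))"
proof -
  have "expansion_scale a c z q p n * h z = (\<Sum>k\<le>n. expansion_coeff a c z q p n k * h (a * q ^ k))"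
    if h: "h \<in> Wgen q p c n" for h
  proof -
    obtain g m where "m \<le> n" "even_theta p m g"
      and "h = (\<lambda>z. g z / (tpoch (c * z) q p m * tpoch (c / z) q p m))"
      using h unfolding mem_Wgen_iff by blast
    with q p show ?thesis by (intro generator_expansion[OF _ _ _ a c z _ _ nz1 nz2 nz3 nz4 nz5]) auto
  qed
  from span_fscale_pointwise_identity[OF fW[unfolded W_def] this]
  show ?thesis unfolding expansion_scale_def expansion_coeff_def .
qed

end
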